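(* Let $(S_n^{(1)},S_n^{(2)})_{n\ge0}$ be a two-elephant walking model with $\alpha_1\alpha_2\ne0$ and $\lambda_\alpha\ne\pm1$. Then almost surely $\lim_{n\to\infty}x_n=\lim_{n\to\infty}y_n=0$, and consequently $\lim_{n\to\infty}S_n^{(1)}/n=\lim_{n\to\infty}S_n^{(2)}/n=0$ almost surely. Moreover, almost surely, $$\lim_{j\to\infty}(1+\lambda_\alpha)^2\,\mathbb E\big((\varepsilon^{(x)}_{j+1})^2\mid\mathcal F_j\big)=\lim_{j\to\infty}(1-\lambda_\alpha)^2\,\mathbb E\big((\varepsilon^{(y)}_{j+1})^2\mid\mathcal F_j\big)=1+\frac{\alpha_1}{\alpha_2},$$ and $$\lim_{j\to\infty}(1-\alpha_1\alpha_2)\,\mathbb E\big(\varepsilon^{(x)}_{j+1}\varepsilon^{(y)}_{j+1}\mid\mathcal F_j\big)=1-\frac{\alpha_1}{\alpha_2}.$$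
   Context: Two-elephant walking model: fix $p_1,p_2\in[0,1]$, $\alpha_i=2p_i-1$. Let $(\xi_n^{(1)})_{n\ge2}$ be i.i.d. Bernoulli($p_1$), $(\xi_n^{(2)})_{n\ge2}$ i.i.d. Bernoulli($p_2$), $(u_n^{(1)})_{n\ge1}$, $(u_n^{(2)})_{n\ge1}$ independent with $u_n^{(i)}$ uniform on $\{1,\dots,n\}$, all mutually independent. $S_0^{(i)}=0$, $X_1^{(1)},X_1^{(2)}\in\{-1,1\}$ given, and for $n\ge1$: $X_{n+1}^{(1)}:=(2\xi^{(1)}_{n+1}-1)X^{(2)}_{u_n^{(2)}}$, $X_{n+1}^{(2)}:=(2\xi^{(2)}_{n+1}-1)X^{(1)}_{u_n^{(1)}}$, $S_n^{(i)}=\sum_{k\le n}X_k^{(i)}$; $\mathcal F_n:=\sigma(X_j^{(i)}:1\le j\le n,\ i=1,2)$. Notation: $\lambda_\alpha:=\operatorname{sgn}(\alpha_2)\sqrt{\alpha_1\alpha_2}$ if $\alpha_1\alpha_2>0$, $\lambda_\alpha:=\mathrm i\operatorname{sgn}(\alpha_2)\sqrt{-\alpha_1\alpha_2}$ if $\alpha_1\alpha_2<0$; $r_\alpha:=\sqrt{\alpha_1/\alpha_2}$ if $\alpha_1\alpha_2>0$, $r_\alpha:=\mathrm i\sqrt{-\alpha_1/\alpha_2}$ if $\alpha_1\alpha_2<0$. $x_n:=\frac{S_n^{(1)}-r_\alpha S_n^{(2)}}{n}$, $y_n:=\frac{S_n^{(1)}+r_\alpha S_n^{(2)}}{n}$,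 and for $j\ge1$ $$\varepsilon^{(x)}_{j+1}:=\frac{1}{1+\lambda_\alpha}\big(X^{(1)}_{j+1}-r_\alpha X^{(2)}_{j+1}+\lambda_\alpha x_j\big),\qquad \varepsilon^{(y)}_{j+1}:=\frac{1}{1-\lambda_\alpha}\big(X^{(1)}_{j+1}+r_\alpha X^{(2)}_{j+1}-\lambda_\alpha y_j\big).$$ (Squares of possibly complex quantities are ordinary squares, not squared moduli.) *)

theory Defs
  imports "HOL-Probability.Probability"
begin

text \<open>The list
  ew_hist a b xi1 xi2 v1 v2 m contains the pairs (X^(1)_k, X^(2)_k) for k = 1..m+1,
  given the initial steps a, b and the sample paths of xi^(1), xi^(2) (values in {0,1})
  and u^(1), u^(2) (values in {1..n}).\<close>

primrec ew_hist :: "int \<Rightarrow> int \<Rightarrow> (nat \<Rightarrow> nat) \<Rightarrow> (nat \<Rightarrow> nat) \<Rightarrow> (nat \<Rightarrow> nat) \<Rightarrow> (nat \<Rightarrow> nat)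
    \<Rightarrow> nat \<Rightarrow> (int \<times> int) list" where
  "ew_hist a b xi1 xi2 v1 v2 0 = [(a, b)]"
| "ew_hist a b xi1 xi2 v1 v2 (Suc m) =
     (let h = ew_hist a b xi1 xi2 v1 v2 m
      in h @ [((2 * int (xi1 (m + 2)) - 1) * snd (h ! (v2 (m + 1) - 1)),
               (2 * int (xi2 (m + 2)) - 1) * fst (h ! (v1 (m + 1) - 1)))])"

definition ew_step :: "int \<Rightarrow> int \<Rightarrow> (nat \<Rightarrow> nat) \<Rightarrow> (nat \<Rightarrow> nat) \<Rightarrow> (nat \<Rightarrow> nat) \<Rightarrow> (nat \<Rightarrow> nat)
    \<Rightarrow> nat \<Rightarrow> int \<times> int" where
  "ew_step a b xi1 xi2 v1 v2 k = ew_hist a b xi1 xi2 v1 v2 (k - 1) ! (k - 1)"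

datatype ew_idx = Xi1 nat | Xi2 nat | U1 nat | U2 nat

fun ew_family :: "(nat \<Rightarrow> 'a \<Rightarrow> nat) \<Rightarrow> (nat \<Rightarrow> 'a \<Rightarrow> nat) \<Rightarrow> (nat \<Rightarrow> 'a \<Rightarrow> nat) \<Rightarrow> (nat \<Rightarrow> 'a \<Rightarrow> nat)
    \<Rightarrow> ew_idx \<Rightarrow> 'a \<Rightarrow> nat" where
  "ew_family xi1 xi2 u1 u2 (Xi1 n) = xi1 n"
| "ew_family xi1 xi2 u1 u2 (Xi2 n) = xi2 n"
| "ew_family xi1 xi2 u1 u2 (U1 n) = u1 n"
| "ew_family xi1 xi2 u1 u2 (U2 n) = u2 n"

definition ew_index :: "ew_idx set" where
  "ew_index = {Xi1 n | n. 2 \<le> n} \<union> {Xi2 n | n. 2 \<le> n} \<union> {U1 n | n. 1 \<le> n} \<union> {U2 n | n. 1 \<le> n}"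

text \<open>lambda_alpha and r_alpha (only used when a1*a2 \<noteq> 0).\<close>
definition lam_alpha :: "real \<Rightarrow> real \<Rightarrow> complex" where
  "lam_alpha a1 a2 = (if a1 * a2 > 0 then complex_of_real (sgn a2 * sqrt (a1 * a2))
                      else \<i> * complex_of_real (sgn a2 * sqrt (- (a1 * a2))))"

definition r_alpha :: "real \<Rightarrow> real \<Rightarrow> complex" where
  "r_alpha a1 a2 = (if a1 * a2 > 0 then complex_of_real (sqrt (a1 / a2))
                    else \<i> * complex_of_real (sqrt (- (a1 / a2))))"

definition cplx_cond_exp :: "'a measure \<Rightarrow> 'a measure \<Rightarrow> ('a \<Rightarrow> complex) \<Rightarrow> 'a \<Rightarrow> complex" where
  "cplx_cond_exp M F f = (\<lambda>\<omega>. Complex (real_cond_exp M F (\<lambda>\<omega>. Re (f \<omega>)) \<omega>)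
                                     (real_cond_exp M F (\<lambda>\<omega>. Im (f \<omega>)) \<omega>))"

end

(*
  Each new step of one elephant copies a uniformly chosen past step of the other one and flips
  it with an independent sign of mean al_i.  Conditionally on the past F_n this gives
  E[X1_{n+1}] = al1 S2_n / n, E[X2_{n+1}] = al2 S1_n / n and
  E[X1_{n+1} X2_{n+1}] = al1 al2 S1_n S2_n / n^2.
  For Q_n = |al2| S1_n^2 + |al1| S2_n^2 these identities and AM-GM give
  E Q_{n+1} <= (1 + 2 mu / n) E Q_n + 2 with mu = sqrt (max 0 (al1 al2)) < 1, so
  E Q_n = O(n^(1 + mu)).  Hence the second moments of S_N / N are summable along N = (k + 1)^m
  for large m, so S_N / N -> 0 almost surely there, and |S_{n+1} - S_n| = 1 fills the gaps.
  Since X_{n+1}^2 = 1, the conditional second moments of the innovations are continuous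
  functions of (S1_n / n, S2_n / n) and converge to their values at the origin, which
  r^2 = al1 / al2 and lam^2 = al1 al2 turn into the stated constants.
*)
theory Submission
  imports Defs
begin

section \<open>The pathwise recursion\<close>

lemma length_ew_hist [simp]: "length (ew_hist a b xi1 xi2 v1 v2 m) = Suc m"
  by (induction m) (simp_all add: Let_def)

lemma ew_hist_nth: "k \<le> m \<Longrightarrow> ew_hist a b xi1 xi2 v1 v2 m ! k = ew_step a b xi1 xi2 v1 v2 (Suc k)"
  unfolding ew_step_def by (induction m) (auto simp: Let_def nth_append le_Suc_eq)

lemma ew_step_0 [simp]: "ew_step a b xi1 xi2 v1 v2 0 = (a, b)"
  and ew_step_1 [simp]: "ew_step a b xi1 xi2 v1 v2 (Suc 0) = (a, b)"
  by (simp_all add: ew_step_def)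

lemma ew_step_Suc:
  assumes "1 \<le> n" "v1 n \<in> {1..n}" "v2 n \<in> {1..n}"
  shows "ew_step a b xi1 xi2 v1 v2 (Suc n) =
     ((2 * int (xi1 (Suc n)) - 1) * snd (ew_step a b xi1 xi2 v1 v2 (v2 n)),
      (2 * int (xi2 (Suc n)) - 1) * fst (ew_step a b xi1 xi2 v1 v2 (v1 n)))"
proof -
  obtain m where m: "n = Suc m" using assms(1) by (cases n) auto
  have "ew_hist a b xi1 xi2 v1 v2 m ! (v n - 1) = ew_step a b xi1 xi2 v1 v2 (v n)"
    if "v n \<in> {1..n}" for v :: "nat \<Rightarrow> nat" using that by (subst ew_hist_nth) (auto simp: m)
  from this[of v1, OF assms(2)] this[of v2, OF assms(3)] show ?thesis
    using assms unfolding ew_step_def m by (simp add: Let_def nth_append)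
qed

lemma ew_step_in_pm1:
  assumes "a \<in> {-1, 1}" "b \<in> {-1, 1}"
    and "\<And>k. 2 \<le> k \<Longrightarrow> xi1 k \<in> {0, 1} \<and> xi2 k \<in> {0, 1}"
    and "\<And>k. 1 \<le> k \<Longrightarrow> v1 k \<in> {1..k} \<and> v2 k \<in> {1..k}"
  shows "fst (ew_step a b xi1 xi2 v1 v2 k) \<in> {-1, 1} \<and> snd (ew_step a b xi1 xi2 v1 v2 k) \<in> {-1, 1}"
proof (induction k rule: less_induct)
  case (less k)
  show ?case
  proof (cases "k \<le> 1")
    case True
    then have "k = 0 \<or> k = 1" by auto
    then show ?thesis using assms(1,2) by auto
  next
    case False
    then obtain n where n: "k = Suc n" "1 \<le> n" by (cases k) auto
    have v: "v1 n \<in> {1..n}" "v2 n \<in> {1..n}" using assms(4)[OF n(2)] by auto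
    have "fst (ew_step a b xi1 xi2 v1 v2 (v1 n)) \<in> {-1, 1}" "snd (ew_step a b xi1 xi2 v1 v2 (v2 n)) \<in> {-1, 1}"
      using less[of "v1 n"] less[of "v2 n"] v n(1) by auto
    moreover have "xi1 (Suc n) \<in> {0, 1}" "xi2 (Suc n) \<in> {0, 1}" using assms(3)[of "Suc n"] n(2) by auto
    ultimately show ?thesis unfolding n(1) ew_step_Suc[of n v1 v2, OF n(2) v] by auto
  qed
qed

lemma measurable_count_space_pair_fun:
  fixes F :: "'b::countable \<Rightarrow> 'c::countable \<Rightarrow> 'd"
  assumes "f \<in> N \<rightarrow>\<^sub>M count_space UNIV" "g \<in> N \<rightarrow>\<^sub>M count_space UNIV"
  shows "(\<lambda>\<omega>. F (f \<omega>) (g \<omega>)) \<in> N \<rightarrow>\<^sub>M count_space UNIV"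
  by (rule measurable_compose_countable[OF measurable_compose_countable[OF measurable_count_space_const assms(2)] assms(1)])

lemma measurable_ew_hist:
  assumes "\<And>k. 2 \<le> k \<Longrightarrow> k \<le> Suc m \<Longrightarrow> xi1 k \<in> N \<rightarrow>\<^sub>M count_space UNIV \<and> xi2 k \<in> N \<rightarrow>\<^sub>M count_space UNIV"
    and "\<And>k. 1 \<le> k \<Longrightarrow> k \<le> m \<Longrightarrow> u1 k \<in> N \<rightarrow>\<^sub>M count_space UNIV \<and> u2 k \<in> N \<rightarrow>\<^sub>M count_space UNIV"
  shows "(\<lambda>\<omega>. ew_hist a b (\<lambda>n. xi1 n \<omega>) (\<lambda>n. xi2 n \<omega>) (\<lambda>n. u1 n \<omega>) (\<lambda>n. u2 n \<omega>) m) \<in> N \<rightarrow>\<^sub>M count_space UNIV"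
  using assms
proof (induction m)
  case (Suc m)
  have xi: "(\<lambda>\<omega>. (xi1 (m + 2) \<omega>, xi2 (m + 2) \<omega>)) \<in> N \<rightarrow>\<^sub>M count_space UNIV"
    by (rule measurable_count_space_pair_fun[where F=Pair]) (use Suc.prems(1)[of "m + 2"] in auto)
  have u: "(\<lambda>\<omega>. (u1 (m + 1) \<omega>, u2 (m + 1) \<omega>)) \<in> N \<rightarrow>\<^sub>M count_space UNIV"
    by (rule measurable_count_space_pair_fun[where F=Pair]) (use Suc.prems(2)[of "m + 1"] in auto)
  have IH: "(\<lambda>\<omega>. ew_hist a b (\<lambda>n. xi1 n \<omega>) (\<lambda>n. xi2 n \<omega>) (\<lambda>n. u1 n \<omega>) (\<lambda>n. u2 n \<omega>) m) \<in> N \<rightarrow>\<^sub>M count_space UNIV"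
    by (rule Suc.IH) (use Suc.prems in auto)
  from measurable_count_space_pair_fun[OF IH measurable_count_space_pair_fun[OF xi u, where F=Pair],
      where F="\<lambda>h ((c1, c2), (d1, d2)). h @ [((2 * int c1 - 1) * snd (h ! (d2 - 1)), (2 * int c2 - 1) * fst (h ! (d1 - 1)))]"]
  show ?case by (simp only: ew_hist.simps Let_def prod.case)
qed simp

lemma (in prob_space) AE_in_set_pmf_if_distr:
  assumes "X \<in> M \<rightarrow>\<^sub>M count_space UNIV" "distr M (count_space UNIV) X = measure_pmf p"
  shows "AE \<omega> in M. X \<omega> \<in> set_pmf p"
  by (rule AE_distrD[OF assms(1)]) (unfold assms(2), simp add: AE_measure_pmf_iff)

lemma (in prob_space) integral_comp_if_distr:
  fixes f :: "'b \<Rightarrow> real"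
  assumes "X \<in> M \<rightarrow>\<^sub>M count_space UNIV" "distr M (count_space UNIV) X = measure_pmf p"
  shows "(\<integral>\<omega>. f (X \<omega>) \<partial>M) = measure_pmf.expectation p f"
  using integral_distr[OF assms(1), of f] assms(2) by simp

lemma sum_mult_of_bool_eq:
  assumes "finite S" "c \<in> S"
  shows "(\<Sum>k\<in>S. f k * of_bool (c = k)) = (f c :: 'b::semiring_1)"
proof -
  have "(\<Sum>k\<in>S. f k * of_bool (c = k)) = (\<Sum>k\<in>S. if c = k then f k else 0)"
    by (intro sum.cong) auto
  then show ?thesis using assms by simp
qed

lemma (in prob_space) integral_mult_random_pick:
  fixes g e :: "'a \<Rightarrow> real" and Z :: "'i \<Rightarrow> 'a \<Rightarrow> real" and U :: "'a \<Rightarrow> 'i"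
  assumes "finite K"
    and int_gZ: "\<And>k. k \<in> K \<Longrightarrow> integrable M (\<lambda>\<omega>. g \<omega> * Z k \<omega>)" and int_e: "integrable M e"
    and indep_U: "\<And>k. k \<in> K \<Longrightarrow> indep_var borel (\<lambda>\<omega>. g \<omega> * Z k \<omega>) borel (\<lambda>\<omega>. of_bool (U \<omega> = k))"
    and indep_e: "\<And>k. k \<in> K \<Longrightarrow> indep_var borel (\<lambda>\<omega>. g \<omega> * Z k \<omega> * of_bool (U \<omega> = k)) borel e"
  shows "(\<integral>\<omega>. g \<omega> * e \<omega> * (\<Sum>k\<in>K. Z k \<omega> * of_bool (U \<omega> = k)) \<partial>M) =
    (\<integral>\<omega>. e \<omega> \<partial>M) * (\<Sum>k\<in>K. (\<integral>\<omega>. of_bool (U \<omega> = k) \<partial>M) * (\<integral>\<omega>. g \<omega> * Z k \<omega> \<partial>M))"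
proof -
  have int_U: "integrable M (\<lambda>\<omega>. of_bool (U \<omega> = k) :: real)" if "k \<in> K" for k
    using indep_var_rv2[OF indep_U[OF that]] by (intro integrable_const_bound[where B=1]) auto
  have int_gZU: "integrable M (\<lambda>\<omega>. g \<omega> * Z k \<omega> * of_bool (U \<omega> = k))" if "k \<in> K" for k
    using indep_var_integrable[OF indep_U[OF that] int_gZ[OF that] int_U[OF that]] .
  have "(\<integral>\<omega>. g \<omega> * e \<omega> * (\<Sum>k\<in>K. Z k \<omega> * of_bool (U \<omega> = k)) \<partial>M) =
      (\<integral>\<omega>. (\<Sum>k\<in>K. g \<omega> * Z k \<omega> * of_bool (U \<omega> = k) * e \<omega>) \<partial>M)"
    by (simp add: sum_distrib_left mult_ac)
  also have "\<dots> = (\<Sum>k\<in>K. \<integral>\<omega>. g \<omega> * Z k \<omega> * of_bool (U \<omega> = k) * e \<omega> \<partial>M)"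
    using indep_var_integrable[OF indep_e int_gZU int_e] by (intro Bochner_Integration.integral_sum) auto
  also have "\<dots> = (\<Sum>k\<in>K. (\<integral>\<omega>. e \<omega> \<partial>M) * ((\<integral>\<omega>. of_bool (U \<omega> = k) \<partial>M) * (\<integral>\<omega>. g \<omega> * Z k \<omega> \<partial>M)))"
    by (intro sum.cong refl)
      (simp add: indep_var_lebesgue_integral indep_e indep_U int_gZU int_gZ int_U int_e)
  finally show ?thesis by (simp add: sum_distrib_left)
qed

lemma (in finite_measure) integrable_mult_bounded:
  fixes c Y :: "'a \<Rightarrow> real"
  assumes "c \<in> borel_measurable M" "Y \<in> borel_measurable M"
    and "AE \<omega> in M. \<bar>c \<omega>\<bar> \<le> B" "AE \<omega> in M. \<bar>Y \<omega>\<bar> \<le> C"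
  shows "integrable M (\<lambda>\<omega>. c \<omega> * Y \<omega>)"
proof (rule integrable_const_bound[where B="B * C"])
  show "AE \<omega> in M. norm (c \<omega> * Y \<omega>) \<le> B * C"
    using assms(3,4) by eventually_elim (simp add: abs_mult mult_mono')
qed (use assms(1,2) in simp)

lemma (in prob_space) AE_tendsto_zero_if_summable_integral:
  fixes Y :: "nat \<Rightarrow> 'a \<Rightarrow> real"
  assumes int: "\<And>k. integrable M (Y k)" and nonneg: "\<And>k. AE \<omega> in M. 0 \<le> Y k \<omega>"
    and summable: "summable (\<lambda>k. \<integral>\<omega>. Y k \<omega> \<partial>M)"
  shows "AE \<omega> in M. (\<lambda>k. Y k \<omega>) \<longlonglongrightarrow> 0"
proof -
  have [measurable]: "Y k \<in> borel_measurable M" for k using int by auto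
  have "(\<integral>\<^sup>+\<omega>. (\<Sum>k. ennreal (Y k \<omega>)) \<partial>M) = (\<Sum>k. \<integral>\<^sup>+\<omega>. ennreal (Y k \<omega>) \<partial>M)"
    by (rule nn_integral_suminf) measurable
  also have "\<dots> = (\<Sum>k. ennreal (\<integral>\<omega>. Y k \<omega> \<partial>M))"
    using int nonneg by (simp add: nn_integral_eq_integral)
  also have "\<dots> = ennreal (\<Sum>k. \<integral>\<omega>. Y k \<omega> \<partial>M)"
    using nonneg summable by (intro suminf_ennreal2 integral_nonneg_AE)
  finally have "AE \<omega> in M. (\<Sum>k. ennreal (Y k \<omega>)) \<noteq> \<infinity>"
    by (intro nn_integral_PInf_AE) auto
  moreover have "AE \<omega> in M. \<forall>k. 0 \<le> Y k \<omega>" using nonneg by (simp add: AE_all_countable)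
  ultimately show ?thesis
    by eventually_elim (auto intro: summable_LIMSEQ_zero summable_suminf_not_top)
qed

lemma abs_diff_le_if_steps_le_1:
  fixes s :: "nat \<Rightarrow> real"
  assumes "\<And>n. \<bar>s (Suc n) - s n\<bar> \<le> 1" "j \<le> n"
  shows "\<bar>s n - s j\<bar> \<le> real (n - j)"
  using assms(2)
proof (induction n rule: dec_induct)
  case (step n)
  then show ?case using assms(1)[of n] by (simp add: Suc_diff_le)
qed simp

lemma lipschitz_div_tendsto_zero_if_subseq:
  fixes s :: "nat \<Rightarrow> real" and N :: "nat \<Rightarrow> nat"
  assumes lip: "\<And>n. \<bar>s (Suc n) - s n\<bar> \<le> 1" and N: "strict_mono N"
    and ratio: "(\<lambda>k. real (N (Suc k)) / real (N k)) \<longlonglongrightarrow> 1"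
    and subseq: "(\<lambda>k. s (N k) / real (N k)) \<longlonglongrightarrow> 0"
  shows "(\<lambda>n. s n / real n) \<longlonglongrightarrow> 0"
proof (rule LIMSEQ_I)
  fix r :: real assume "0 < r"
  have "\<forall>\<^sub>F k in sequentially. \<bar>s (N k) / real (N k)\<bar> < r / 2"
    by (rule order_tendstoD(2)[OF tendsto_rabs_zero[OF subseq]]) (use \<open>0 < r\<close> in simp)
  moreover have "\<forall>\<^sub>F k in sequentially. real (N (Suc k)) / real (N k) < 1 + r / 2"
    by (rule order_tendstoD(2)[OF ratio]) (use \<open>0 < r\<close> in simp)
  ultimately have "\<forall>\<^sub>F k in sequentially. 1 \<le> k \<and> \<bar>s (N k) / real (N k)\<bar> < r / 2
      \<and> real (N (Suc k)) / real (N k) < 1 + r / 2"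
    using eventually_ge_at_top[of 1] by eventually_elim blast
  then obtain k0 where k0: "\<And>k. k0 \<le> k \<Longrightarrow> 1 \<le> k \<and> \<bar>s (N k) / real (N k)\<bar> < r / 2
      \<and> real (N (Suc k)) / real (N k) < 1 + r / 2"
    unfolding eventually_sequentially by blast
  show "\<exists>n0. \<forall>n\<ge>n0. norm (s n / real n - 0) < r"
  proof (intro exI allI impI)
    fix n assume n: "N k0 \<le> n"
    define j where "j = (LEAST j. n < N j)"
    have "n < N (Suc n)" using strict_mono_imp_increasing[OF N, of "Suc n"] by simp
    then have "n < N j" unfolding j_def by (rule LeastI)
    moreover have "k0 < j" using n \<open>n < N j\<close> strict_mono_less_eq[OF N, of j k0] by linarith
    ultimately obtain k where k: "j = Suc k" "k0 \<le> k" "n < N (Suc k)" by (cases j) auto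
    have "\<not> n < N k" using not_less_Least[of k "\<lambda>j. n < N j"] k(1) unfolding j_def by simp
    then have Nk: "N k \<le> n" by simp
    have pos: "0 < real (N k)" using k0[OF k(2)] strict_mono_imp_increasing[OF N, of k] by simp
    have "\<bar>s n\<bar> \<le> \<bar>s (N k)\<bar> + (real (N (Suc k)) - real (N k))"
      using abs_diff_le_if_steps_le_1[of s, OF lip Nk] k(3) Nk by linarith
    then have "\<bar>s n\<bar> / real (N k) \<le> (\<bar>s (N k)\<bar> + (real (N (Suc k)) - real (N k))) / real (N k)"
      using pos by (intro divide_right_mono) auto
    also have "\<dots> = \<bar>s (N k) / real (N k)\<bar> + (real (N (Suc k)) / real (N k) - 1)"
      using pos by (simp add: abs_divide field_simps)
    also have "\<dots> < r" using k0[OF k(2)] by linarith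
    finally have "\<bar>s n\<bar> / real (N k) < r" .
    moreover have "\<bar>s n\<bar> / real n \<le> \<bar>s n\<bar> / real (N k)"
      using Nk pos by (intro divide_left_mono) auto
    ultimately show "norm (s n / real n - 0) < r" by (simp add: abs_divide)
  qed
qed

lemma powr_add_one_ge:
  fixes x mu :: real
  assumes "1 \<le> x" "0 \<le> mu"
  shows "x powr (1 + mu) + (1 + mu) * x powr mu \<le> (x + 1) powr (1 + mu)"
proof -
  have "DERIV (\<lambda>t. t powr (1 + mu)) t :> (1 + mu) * t powr mu" if "x \<le> t" for t
    using has_real_derivative_powr[of t "1 + mu"] that assms(1) by simp
  then obtain z where z: "x < z" "(x + 1) powr (1 + mu) - x powr (1 + mu) = (1 + mu) * z powr mu"
    using MVT2[of x "x + 1" "\<lambda>t. t powr (1 + mu)" "\<lambda>t. (1 + mu) * t powr mu"] by auto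
  have "x powr mu \<le> z powr mu" using z assms by (intro powr_mono2) auto
  then have "(1 + mu) * x powr mu \<le> (1 + mu) * z powr mu" using assms(2) by (intro mult_left_mono) auto
  then show ?thesis using z by simp
qed

lemma growth_bound_if_recursion:
  fixes q :: "nat \<Rightarrow> real" and mu c K :: real
  assumes mu: "0 \<le> mu" "mu < 1" and c: "0 \<le> c"
    and rec: "\<And>n. 1 \<le> n \<Longrightarrow> q (Suc n) \<le> (1 + 2 * mu / real n) * q n + c"
    and q1: "q 1 \<le> K" and K: "c / (1 - mu) \<le> K"
    and n: "1 \<le> n"
  shows "q n \<le> K * real n powr (1 + mu)"
  using n
proof (induction n rule: nat_induct_at_least)
  case (Suc n)
  have n: "1 \<le> real n" using Suc by simp
  have cK: "c \<le> K * (1 - mu)" using K mu by (simp add: divide_le_eq mult.commute)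
  then have "0 \<le> K * (1 - mu)" using c by linarith
  then have K0: "0 \<le> K" using mu by (simp add: zero_le_mult_iff)
  have "K * (1 - mu) * 1 \<le> K * (1 - mu) * real n powr mu"
    using \<open>0 \<le> K * (1 - mu)\<close> n mu by (intro mult_left_mono ge_one_powr_ge_zero) auto
  with cK have c_le: "c \<le> K * (1 - mu) * real n powr mu" by linarith
  have "(1 + 2 * mu / real n) * q n \<le> (1 + 2 * mu / real n) * (K * real n powr (1 + mu))"
    using Suc.IH mu n by (intro mult_left_mono) auto
  then have "q (Suc n) \<le> (1 + 2 * mu / real n) * (K * real n powr (1 + mu)) + c"
    using rec[OF Suc(1)] by linarith
  also have "\<dots> = K * real n powr (1 + mu) + 2 * mu * K * real n powr mu + c"
    using n by (simp add: powr_add field_simps)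
  also have "\<dots> \<le> K * (real n powr (1 + mu) + (1 + mu) * real n powr mu)"
    using c_le by (simp add: algebra_simps)
  also have "\<dots> \<le> K * (real n + 1) powr (1 + mu)"
    using powr_add_one_ge[OF n mu(1)] K0 by (intro mult_left_mono) auto
  finally show ?case by (simp add: add.commute)
qed (use q1 in simp)

lemma Suc_power_ratio_tendsto_1:
  "(\<lambda>k. real (Suc (Suc k) ^ m) / real (Suc k ^ m)) \<longlonglongrightarrow> 1"
proof -
  have "(\<lambda>k. (real (Suc (Suc k)) / real (Suc k)) ^ m) \<longlonglongrightarrow> 1 ^ m"
    by (intro tendsto_power LIMSEQ_Suc[OF LIMSEQ_Suc_n_over_n])
  then show ?thesis by (simp add: power_divide del: of_nat_Suc)
qed

lemma (in prob_space) AE_div_tendsto_zero_along_powers: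
  fixes T :: "nat \<Rightarrow> 'a \<Rightarrow> real" and C mu :: real
  assumes int: "\<And>n. integrable M (\<lambda>\<omega>. (T n \<omega>)\<^sup>2)"
    and moment: "\<And>n. 1 \<le> n \<Longrightarrow> (\<integral>\<omega>. (T n \<omega>)\<^sup>2 \<partial>M) \<le> C * real n powr (1 + mu)"
    and m: "real m * (mu - 1) < -1"
  shows "AE \<omega> in M. (\<lambda>k. T (Suc k ^ m) \<omega> / real (Suc k ^ m)) \<longlonglongrightarrow> 0"
proof -
  define Y where "Y k \<omega> = (T (Suc k ^ m) \<omega> / real (Suc k ^ m))\<^sup>2" for k \<omega>
  have EY: "(\<integral>\<omega>. Y k \<omega> \<partial>M) \<le> C * real (Suc k) powr (real m * (mu - 1))" for k
  proof -
    have pos: "0 < real (Suc k ^ m)" by simp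
    have "(\<integral>\<omega>. Y k \<omega> \<partial>M) = (\<integral>\<omega>. (T (Suc k ^ m) \<omega>)\<^sup>2 \<partial>M) / real (Suc k ^ m) ^ 2"
      by (simp add: Y_def power_divide)
    also have "\<dots> \<le> C * real (Suc k ^ m) powr (1 + mu) / real (Suc k ^ m) ^ 2"
      by (intro divide_right_mono moment) simp_all
    also have "\<dots> = C * real (Suc k ^ m) powr (mu - 1)"
      using pos by (simp add: powr_add powr_diff power2_eq_square field_simps del: of_nat_power)
    also have "real (Suc k ^ m) powr (mu - 1) = real (Suc k) powr (real m * (mu - 1))"
      by (simp add: powr_powr[symmetric] powr_realpow del: of_nat_Suc)
    finally show ?thesis .
  qed
  have "summable (\<lambda>k. real (Suc k) powr (real m * (mu - 1)))"
    using summable_Suc_iff[where f="\<lambda>k. real k powr (real m * (mu - 1))"] m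
    by (simp add: summable_real_powr_iff del: of_nat_Suc)
  moreover have "norm (\<integral>\<omega>. Y k \<omega> \<partial>M) \<le> C * real (Suc k) powr (real m * (mu - 1))" for k
  proof -
    have "0 \<le> (\<integral>\<omega>. Y k \<omega> \<partial>M)" by (rule integral_nonneg_AE) (simp add: Y_def)
    then show ?thesis using EY[of k] by simp
  qed
  ultimately have "summable (\<lambda>k. \<integral>\<omega>. Y k \<omega> \<partial>M)"
    by (metis summable_comparison_test' summable_mult)
  then have "AE \<omega> in M. (\<lambda>k. Y k \<omega>) \<longlonglongrightarrow> 0"
    by (intro AE_tendsto_zero_if_summable_integral) (simp_all add: Y_def power_divide int)
  then show ?thesis
  proof eventually_elim
    case (elim \<omega>)
    have "(\<lambda>k. \<bar>T (Suc k ^ m) \<omega> / real (Suc k ^ m)\<bar>) \<longlonglongrightarrow> 0"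
      using tendsto_real_sqrt[OF elim] by (simp add: Y_def del: of_nat_power)
    then show ?case by (rule tendsto_rabs_zero_cancel)
  qed
qed

lemma (in prob_space) AE_div_tendsto_zero_if_second_moment_le:
  fixes T :: "nat \<Rightarrow> 'a \<Rightarrow> real" and C mu :: real
  assumes int: "\<And>n. integrable M (\<lambda>\<omega>. (T n \<omega>)\<^sup>2)"
    and moment: "\<And>n. 1 \<le> n \<Longrightarrow> (\<integral>\<omega>. (T n \<omega>)\<^sup>2 \<partial>M) \<le> C * real n powr (1 + mu)"
    and mu: "mu < 1"
    and lip: "AE \<omega> in M. \<forall>n. \<bar>T (Suc n) \<omega> - T n \<omega>\<bar> \<le> 1"
  shows "AE \<omega> in M. (\<lambda>n. T n \<omega> / real n) \<longlonglongrightarrow> 0"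
proof -
  define m where "m = Suc (nat \<lceil>2 / (1 - mu)\<rceil>)"
  have "2 / (1 - mu) < real m" unfolding m_def by linarith
  then have "2 < real m * (1 - mu)" using mu by (simp add: divide_less_eq)
  then have "real m * (mu - 1) < -1" by (simp add: algebra_simps)
  with int moment have "AE \<omega> in M. (\<lambda>k. T (Suc k ^ m) \<omega> / real (Suc k ^ m)) \<longlonglongrightarrow> 0"
    by (rule AE_div_tendsto_zero_along_powers)
  with lip show ?thesis
  proof eventually_elim
    case (elim \<omega>)
    have "strict_mono (\<lambda>k. Suc k ^ m)" unfolding m_def by (intro strict_monoI power_strict_mono) auto
    with elim show ?case
      by (intro lipschitz_div_tendsto_zero_if_subseq[OF _ _ Suc_power_ratio_tendsto_1]) auto
  qed
qed

lemma cross_term_le: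
  fixes a1 a2 s t :: real
  shows "(\<bar>a2\<bar> * a1 + \<bar>a1\<bar> * a2) * (s * t) \<le> sqrt (max 0 (a1 * a2)) * (\<bar>a2\<bar> * s\<^sup>2 + \<bar>a1\<bar> * t\<^sup>2)"
proof (cases "a1 * a2 > 0")
  case True
  define u v where "u = sqrt \<bar>a2\<bar> * \<bar>s\<bar>" and "v = sqrt \<bar>a1\<bar> * \<bar>t\<bar>"
  have "sqrt (a1 * a2) = sqrt \<bar>a1\<bar> * sqrt \<bar>a2\<bar>" using True by (metis abs_mult abs_of_pos real_sqrt_mult)
  then have uv: "u * v = sqrt (a1 * a2) * \<bar>s * t\<bar>" by (simp add: u_def v_def abs_mult mult_ac)
  have "\<bar>\<bar>a2\<bar> * a1 + \<bar>a1\<bar> * a2\<bar> = 2 * (a1 * a2)"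
    using True by (auto simp: zero_less_mult_iff abs_mult)
  then have "(\<bar>a2\<bar> * a1 + \<bar>a1\<bar> * a2) * (s * t) \<le> 2 * (a1 * a2) * \<bar>s * t\<bar>"
    by (metis abs_ge_self abs_mult)
  also have "\<dots> = 2 * (sqrt (a1 * a2) * sqrt (a1 * a2)) * \<bar>s * t\<bar>"
    using True by simp
  also have "\<dots> = sqrt (a1 * a2) * (2 * u * v)"
    unfolding mult.assoc[of 2 u v] uv by (simp only: mult_ac)
  also have "\<dots> \<le> sqrt (a1 * a2) * (u\<^sup>2 + v\<^sup>2)"
    by (rule mult_left_mono[OF sum_squares_bound]) (use True in simp)
  also have "u\<^sup>2 + v\<^sup>2 = \<bar>a2\<bar> * s\<^sup>2 + \<bar>a1\<bar> * t\<^sup>2"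
    by (simp add: u_def v_def power_mult_distrib)
  finally show ?thesis using True by simp
next
  case False
  then have "\<bar>a2\<bar> * a1 + \<bar>a1\<bar> * a2 = 0"
    by (cases "a1 \<ge> 0"; cases "a2 \<ge> 0") (auto simp: not_less zero_less_mult_iff)
  then show ?thesis by simp
qed

section \<open>The two-elephant walk\<close>

locale ew = prob_space M for M :: "'a measure" +
  fixes p1 p2 :: real and a b :: int and xi1 xi2 u1 u2 :: "nat \<Rightarrow> 'a \<Rightarrow> nat"
  assumes p1: "p1 \<in> {0..1}" and p2: "p2 \<in> {0..1}"
    and ab: "a \<in> {-1, 1}" "b \<in> {-1, 1}"
    and indep: "indep_vars (\<lambda>_. count_space UNIV) (ew_family xi1 xi2 u1 u2) ew_index"
    and xi1_distr: "\<And>n. 2 \<le> n \<Longrightarrow> distr M (count_space UNIV) (xi1 n) = measure_pmf (map_pmf of_bool (bernoulli_pmf p1))"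
    and xi2_distr: "\<And>n. 2 \<le> n \<Longrightarrow> distr M (count_space UNIV) (xi2 n) = measure_pmf (map_pmf of_bool (bernoulli_pmf p2))"
    and u1_distr: "\<And>n. 1 \<le> n \<Longrightarrow> distr M (count_space UNIV) (u1 n) = measure_pmf (pmf_of_set {1..n})"
    and u2_distr: "\<And>n. 1 \<le> n \<Longrightarrow> distr M (count_space UNIV) (u2 n) = measure_pmf (pmf_of_set {1..n})"
begin

abbreviation "al1 \<equiv> 2 * p1 - 1"
abbreviation "al2 \<equiv> 2 * p2 - 1"

definition "X1 k \<omega> = real_of_int (fst (ew_step a b (\<lambda>n. xi1 n \<omega>) (\<lambda>n. xi2 n \<omega>) (\<lambda>n. u1 n \<omega>) (\<lambda>n. u2 n \<omega>) k))"
definition "X2 k \<omega> = real_of_int (snd (ew_step a b (\<lambda>n. xi1 n \<omega>) (\<lambda>n. xi2 n \<omega>) (\<lambda>n. u1 n \<omega>) (\<lambda>n. u2 n \<omega>) k))"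
definition "S1 n \<omega> = (\<Sum>k\<in>{1..n}. X1 k \<omega>)"
definition "S2 n \<omega> = (\<Sum>k\<in>{1..n}. X2 k \<omega>)"
definition "FF n = sigma (space M)
    ({X1 k -` A \<inter> space M | k A. k \<in> {1..n} \<and> A \<in> sets borel} \<union>
     {X2 k -` A \<inter> space M | k A. k \<in> {1..n} \<and> A \<in> sets borel})"

text \<open>The first \<open>n\<close> steps only depend on the drivers indexed by \<open>past n\<close>.\<close>
definition "drivers I = vimage_algebra (space M) (\<lambda>\<omega>. restrict (\<lambda>i. ew_family xi1 xi2 u1 u2 i \<omega>) I)
    (PiM I (\<lambda>_. count_space UNIV))"
definition "past n = {Xi1 k | k. 2 \<le> k \<and> k \<le> n} \<union> {Xi2 k | k. 2 \<le> k \<and> k \<le> n}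
    \<union> {U1 k | k. 1 \<le> k \<and> k < n} \<union> {U2 k | k. 1 \<le> k \<and> k < n}"

lemma past_subset: "past n \<subseteq> ew_index"
  unfolding past_def ew_index_def by auto

lemma measurable_driver: "i \<in> ew_index \<Longrightarrow> ew_family xi1 xi2 u1 u2 i \<in> M \<rightarrow>\<^sub>M count_space UNIV"
  using indep unfolding indep_vars_def by auto

lemma measurable_drivers_restrict:
  "(\<lambda>\<omega>. restrict (\<lambda>i. ew_family xi1 xi2 u1 u2 i \<omega>) I) \<in> drivers I \<rightarrow>\<^sub>M PiM I (\<lambda>_. count_space UNIV)"
  unfolding drivers_def by (rule measurable_vimage_algebra1) (auto simp: space_PiM)

lemma space_drivers [simp]: "space (drivers I) = space M"
  unfolding drivers_def by simp

lemma subalgebra_drivers: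
  assumes "I \<subseteq> ew_index"
  shows "subalgebra M (drivers I)"
proof -
  have "sets (drivers I) \<subseteq> sets M"
    unfolding drivers_def
    by (rule sets_image_in_sets[OF refl]) (use assms in \<open>auto intro!: measurable_restrict measurable_driver\<close>)
  then show ?thesis unfolding subalgebra_def by simp
qed

lemma subalgebra_drivers_mono: "I \<subseteq> J \<Longrightarrow> subalgebra (drivers J) (drivers I)"
proof -
  assume "I \<subseteq> J"
  have "(\<lambda>\<omega>. restrict (restrict (\<lambda>i. ew_family xi1 xi2 u1 u2 i \<omega>) J) I) \<in> drivers J \<rightarrow>\<^sub>M PiM I (\<lambda>_. count_space UNIV)"
    by (rule measurable_compose[OF measurable_drivers_restrict measurable_restrict_subset[OF \<open>I \<subseteq> J\<close>]])
  then have "(\<lambda>\<omega>. restrict (\<lambda>i. ew_family xi1 xi2 u1 u2 i \<omega>) I) \<in> drivers J \<rightarrow>\<^sub>M PiM I (\<lambda>_. count_space UNIV)"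
    using \<open>I \<subseteq> J\<close> by (simp add: restrict_restrict Int_absorb1)
  from sets_image_in_sets[OF space_drivers this] show ?thesis
    unfolding subalgebra_def drivers_def[of I] by simp
qed

lemma measurable_drivers_subset:
  "I \<subseteq> J \<Longrightarrow> f \<in> drivers I \<rightarrow>\<^sub>M N \<Longrightarrow> f \<in> drivers J \<rightarrow>\<^sub>M N"
  by (rule measurable_from_subalg[OF subalgebra_drivers_mono])

lemma measurable_drivers_M: "I \<subseteq> ew_index \<Longrightarrow> f \<in> drivers I \<rightarrow>\<^sub>M N \<Longrightarrow> f \<in> M \<rightarrow>\<^sub>M N"
  by (rule measurable_from_subalg[OF subalgebra_drivers])

lemma measurable_driver_drivers: "i \<in> I \<Longrightarrow> ew_family xi1 xi2 u1 u2 i \<in> drivers I \<rightarrow>\<^sub>M count_space UNIV"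
  using measurable_compose[OF measurable_drivers_restrict measurable_component_singleton, of i I] by simp

lemma indep_drivers:
  assumes "I \<subseteq> ew_index" "J \<subseteq> ew_index" "I \<inter> J = {}"
    and Z: "Z \<in> borel_measurable (drivers I)" and W: "W \<in> borel_measurable (drivers J)"
  shows "indep_var borel Z borel W"
  unfolding indep_var_eq
proof (intro conjI)
  have "indep_var (PiM I (\<lambda>_. count_space UNIV)) (\<lambda>\<omega>. restrict (\<lambda>i. ew_family xi1 xi2 u1 u2 i \<omega>) I)
                  (PiM J (\<lambda>_. count_space UNIV)) (\<lambda>\<omega>. restrict (\<lambda>i. ew_family xi1 xi2 u1 u2 i \<omega>) J)"
    by (rule indep_var_restrict[OF indep assms(3,1,2)])
  then have indep_IJ: "indep_set (sets (drivers I)) (sets (drivers J))"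
    unfolding indep_var_eq drivers_def sets_vimage_algebra by simp
  have gen: "sigma_sets (space M) {Y -` A \<inter> space M |A. A \<in> sets borel} \<subseteq> sets (drivers K)"
    if "Y \<in> borel_measurable (drivers K)" for Y :: "'a \<Rightarrow> 'c::topological_space" and K
  proof -
    have "{Y -` A \<inter> space M |A. A \<in> sets borel} \<subseteq> sets (drivers K)"
      using measurable_sets[OF that] by auto
    then show ?thesis using sets.sigma_sets_subset[of _ "drivers K"] by simp
  qed
  show "random_variable borel Z" by (rule measurable_drivers_M[OF assms(1) Z])
  show "random_variable borel W" by (rule measurable_drivers_M[OF assms(2) W])
  show "indep_set (sigma_sets (space M) {Z -` A \<inter> space M |A. A \<in> sets borel})
      (sigma_sets (space M) {W -` A \<inter> space M |A. A \<in> sets borel})"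
    unfolding indep_set_def
    by (rule indep_sets_mono_sets[OF indep_IJ[unfolded indep_set_def]])
      (use gen[OF Z] gen[OF W] in \<open>auto split: bool.split\<close>)
qed

lemma measurable_drivers_xi_u:
  "Xi1 k \<in> I \<Longrightarrow> xi1 k \<in> drivers I \<rightarrow>\<^sub>M count_space UNIV"
  "Xi2 k \<in> I \<Longrightarrow> xi2 k \<in> drivers I \<rightarrow>\<^sub>M count_space UNIV"
  "U1 k \<in> I \<Longrightarrow> u1 k \<in> drivers I \<rightarrow>\<^sub>M count_space UNIV"
  "U2 k \<in> I \<Longrightarrow> u2 k \<in> drivers I \<rightarrow>\<^sub>M count_space UNIV"
  using measurable_driver_drivers[of "Xi1 k" I] measurable_driver_drivers[of "Xi2 k" I]
    measurable_driver_drivers[of "U1 k" I] measurable_driver_drivers[of "U2 k" I] by simp_all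

lemma measurable_ew_step_drivers:
  "past k \<subseteq> I \<Longrightarrow> (\<lambda>\<omega>. ew_step a b (\<lambda>n. xi1 n \<omega>) (\<lambda>n. xi2 n \<omega>) (\<lambda>n. u1 n \<omega>) (\<lambda>n. u2 n \<omega>) k)
     \<in> drivers I \<rightarrow>\<^sub>M count_space UNIV"
  unfolding ew_step_def
  by (rule measurable_compose[OF measurable_ew_hist[of "k - 1"]])
    (auto intro!: measurable_drivers_xi_u simp: past_def)

lemma measurable_X_drivers:
  assumes "past n \<subseteq> I" "k \<le> n"
  shows "X1 k \<in> borel_measurable (drivers I)" "X2 k \<in> borel_measurable (drivers I)"
proof -
  have "past k \<subseteq> I" using assms by (auto simp: past_def)
  from measurable_ew_step_drivers[OF this] show "X1 k \<in> borel_measurable (drivers I)" "X2 k \<in> borel_measurable (drivers I)"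
    unfolding X1_def[abs_def] X2_def[abs_def] by simp_all
qed

lemma measurable_S_drivers:
  assumes "past n \<subseteq> I"
  shows "S1 n \<in> borel_measurable (drivers I)" "S2 n \<in> borel_measurable (drivers I)"
  unfolding S1_def[abs_def] S2_def[abs_def] using measurable_X_drivers[OF assms]
  by (auto intro!: borel_measurable_sum)

lemma measurable_X [measurable]: "X1 k \<in> borel_measurable M" "X2 k \<in> borel_measurable M"
  by (rule measurable_drivers_M[OF past_subset measurable_X_drivers(1)[OF order_refl order_refl]],
      rule measurable_drivers_M[OF past_subset measurable_X_drivers(2)[OF order_refl order_refl]])

lemma measurable_S [measurable]: "S1 n \<in> borel_measurable M" "S2 n \<in> borel_measurable M"
  unfolding S1_def[abs_def] S2_def[abs_def] by (auto intro!: borel_measurable_sum)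

lemma space_FF [simp]: "space (FF n) = space M"
  unfolding FF_def by (rule space_measure_of) auto

lemma sets_FF: "sets (FF n) = sigma_sets (space M)
    ({X1 k -` A \<inter> space M | k A. k \<in> {1..n} \<and> A \<in> sets borel} \<union>
     {X2 k -` A \<inter> space M | k A. k \<in> {1..n} \<and> A \<in> sets borel})"
  unfolding FF_def by (rule sets_measure_of) auto

lemma subalgebra_FF_drivers: "subalgebra (drivers (past n)) (FF n)"
proof -
  have "X1 k -` A \<inter> space M \<in> sets (drivers (past n))" "X2 k -` A \<inter> space M \<in> sets (drivers (past n))"
    if "k \<in> {1..n}" "A \<in> sets borel" for k A
    using measurable_sets[OF measurable_X_drivers(1)[of n _ k] that(2)]
      measurable_sets[OF measurable_X_drivers(2)[of n _ k] that(2)] that by auto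
  then have "{X1 k -` A \<inter> space M | k A. k \<in> {1..n} \<and> A \<in> sets borel} \<union>
      {X2 k -` A \<inter> space M | k A. k \<in> {1..n} \<and> A \<in> sets borel} \<subseteq> sets (drivers (past n))"
    by blast
  from sets.sigma_sets_subset[OF this] show ?thesis unfolding subalgebra_def sets_FF by simp
qed

lemma subalgebra_FF: "subalgebra M (FF n)"
  using subalgebra_FF_drivers subalgebra_drivers[OF past_subset] unfolding subalgebra_def by auto

lemma measurable_FF_drivers: "f \<in> FF n \<rightarrow>\<^sub>M N \<Longrightarrow> f \<in> drivers (past n) \<rightarrow>\<^sub>M N"
  by (rule measurable_from_subalg[OF subalgebra_FF_drivers])

lemma measurable_X_FF:
  assumes "k \<in> {1..n}"
  shows "X1 k \<in> borel_measurable (FF n)" "X2 k \<in> borel_measurable (FF n)"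
proof -
  have "X1 k -` A \<inter> space M \<in> sets (FF n)" "X2 k -` A \<inter> space M \<in> sets (FF n)" if "A \<in> sets borel" for A
    unfolding sets_FF using assms that by blast+
  then show "X1 k \<in> borel_measurable (FF n)" "X2 k \<in> borel_measurable (FF n)"
    by (auto intro: measurableI)
qed

lemma measurable_S_FF: "S1 n \<in> borel_measurable (FF n)" "S2 n \<in> borel_measurable (FF n)"
  unfolding S1_def[abs_def] S2_def[abs_def] using measurable_X_FF by (auto intro!: borel_measurable_sum)

definition "good \<omega> \<longleftrightarrow> (\<forall>k. (2 \<le> k \<longrightarrow> xi1 k \<omega> \<in> {0, 1} \<and> xi2 k \<omega> \<in> {0, 1}) \<and>
                             (1 \<le> k \<longrightarrow> u1 k \<omega> \<in> {1..k} \<and> u2 k \<omega> \<in> {1..k}))"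

lemma measurable_xi_u:
  "2 \<le> k \<Longrightarrow> xi1 k \<in> M \<rightarrow>\<^sub>M count_space UNIV" "2 \<le> k \<Longrightarrow> xi2 k \<in> M \<rightarrow>\<^sub>M count_space UNIV"
  "1 \<le> k \<Longrightarrow> u1 k \<in> M \<rightarrow>\<^sub>M count_space UNIV" "1 \<le> k \<Longrightarrow> u2 k \<in> M \<rightarrow>\<^sub>M count_space UNIV"
  using measurable_driver[of "Xi1 k"] measurable_driver[of "Xi2 k"] measurable_driver[of "U1 k"]
    measurable_driver[of "U2 k"] by (auto simp: ew_index_def)

lemma AE_good: "AE \<omega> in M. good \<omega>"
proof -
  have xi: "AE \<omega> in M. 2 \<le> k \<longrightarrow> xi1 k \<omega> \<in> {0, 1} \<and> xi2 k \<omega> \<in> {0, 1}" for k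
  proof (cases "2 \<le> k")
    case True
    from AE_in_set_pmf_if_distr[OF measurable_xi_u(1)[OF True] xi1_distr[OF True]]
      AE_in_set_pmf_if_distr[OF measurable_xi_u(2)[OF True] xi2_distr[OF True]]
    show ?thesis by eventually_elim auto
  qed simp
  have u: "AE \<omega> in M. 1 \<le> k \<longrightarrow> u1 k \<omega> \<in> {1..k} \<and> u2 k \<omega> \<in> {1..k}" for k
  proof (cases "1 \<le> k")
    case True
    from AE_in_set_pmf_if_distr[OF measurable_xi_u(3)[OF True] u1_distr[OF True]]
      AE_in_set_pmf_if_distr[OF measurable_xi_u(4)[OF True] u2_distr[OF True]]
    show ?thesis using True by eventually_elim auto
  qed simp
  have "AE \<omega> in M. (2 \<le> k \<longrightarrow> xi1 k \<omega> \<in> {0, 1} \<and> xi2 k \<omega> \<in> {0, 1}) \<and>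
      (1 \<le> k \<longrightarrow> u1 k \<omega> \<in> {1..k} \<and> u2 k \<omega> \<in> {1..k})" for k
    using xi[of k] u[of k] by eventually_elim (intro conjI)
  then show ?thesis unfolding good_def by (simp add: AE_all_countable)
qed

lemma good_X:
  assumes "good \<omega>"
  shows "X1 k \<omega> \<in> {-1, 1}" "X2 k \<omega> \<in> {-1, 1}"
proof -
  have "fst (ew_step a b (\<lambda>n. xi1 n \<omega>) (\<lambda>n. xi2 n \<omega>) (\<lambda>n. u1 n \<omega>) (\<lambda>n. u2 n \<omega>) k) \<in> {-1, 1} \<and>
      snd (ew_step a b (\<lambda>n. xi1 n \<omega>) (\<lambda>n. xi2 n \<omega>) (\<lambda>n. u1 n \<omega>) (\<lambda>n. u2 n \<omega>) k) \<in> {-1, 1}"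
    by (rule ew_step_in_pm1[OF ab]) (use assms in \<open>simp_all add: good_def\<close>)
  then show "X1 k \<omega> \<in> {-1, 1}" "X2 k \<omega> \<in> {-1, 1}" unfolding X1_def X2_def by auto
qed

lemma good_abs_X_le:
  "good \<omega> \<Longrightarrow> \<bar>X1 k \<omega>\<bar> \<le> 1" "good \<omega> \<Longrightarrow> \<bar>X2 k \<omega>\<bar> \<le> 1"
  using good_X[of \<omega> k] by auto

lemma good_abs_S_le:
  assumes "good \<omega>"
  shows "\<bar>S1 n \<omega>\<bar> \<le> n" "\<bar>S2 n \<omega>\<bar> \<le> n"
proof -
  have "\<bar>\<Sum>k\<in>{1..n}. X k \<omega>\<bar> \<le> n" if "\<And>k. \<bar>X k \<omega>\<bar> \<le> 1" for X :: "nat \<Rightarrow> 'a \<Rightarrow> real"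
  proof -
    have "\<bar>\<Sum>k\<in>{1..n}. X k \<omega>\<bar> \<le> (\<Sum>k\<in>{1..n}. \<bar>X k \<omega>\<bar>)" by (rule sum_abs)
    also have "\<dots> \<le> n" using sum_mono[of "{1..n}" "\<lambda>k. \<bar>X k \<omega>\<bar>" "\<lambda>_. 1"] that by simp
    finally show ?thesis .
  qed
  then show "\<bar>S1 n \<omega>\<bar> \<le> n" "\<bar>S2 n \<omega>\<bar> \<le> n"
    unfolding S1_def S2_def using good_abs_X_le[OF assms] by blast+
qed

lemma good_abs_sign_le:
  assumes "good \<omega>" "2 \<le> k"
  shows "\<bar>2 * real (xi1 k \<omega>) - 1\<bar> \<le> 1" "\<bar>2 * real (xi2 k \<omega>) - 1\<bar> \<le> 1"
  using assms unfolding good_def by fastforce+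

text \<open>The sums pick \<open>X2 (u2 n \<omega>) \<omega>\<close> and \<open>X1 (u1 n \<omega>) \<omega>\<close>; written this way they are visibly
  functions of the past steps and of \<open>u1 n\<close>, \<open>u2 n\<close>.\<close>
lemma good_X_Suc:
  assumes "good \<omega>" "1 \<le> n"
  shows "X1 (Suc n) \<omega> = (2 * real (xi1 (Suc n) \<omega>) - 1) * (\<Sum>k\<in>{1..n}. X2 k \<omega> * of_bool (u2 n \<omega> = k))"
    and "X2 (Suc n) \<omega> = (2 * real (xi2 (Suc n) \<omega>) - 1) * (\<Sum>k\<in>{1..n}. X1 k \<omega> * of_bool (u1 n \<omega> = k))"
proof -
  have u: "u1 n \<omega> \<in> {1..n}" "u2 n \<omega> \<in> {1..n}" using assms unfolding good_def by auto
  then have "(\<Sum>k\<in>{1..n}. X2 k \<omega> * of_bool (u2 n \<omega> = k)) = X2 (u2 n \<omega>) \<omega>"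
    "(\<Sum>k\<in>{1..n}. X1 k \<omega> * of_bool (u1 n \<omega> = k)) = X1 (u1 n \<omega>) \<omega>"
    by (simp_all add: sum_mult_of_bool_eq)
  then show "X1 (Suc n) \<omega> = (2 * real (xi1 (Suc n) \<omega>) - 1) * (\<Sum>k\<in>{1..n}. X2 k \<omega> * of_bool (u2 n \<omega> = k))"
    and "X2 (Suc n) \<omega> = (2 * real (xi2 (Suc n) \<omega>) - 1) * (\<Sum>k\<in>{1..n}. X1 k \<omega> * of_bool (u1 n \<omega> = k))"
    using ew_step_Suc[of n "\<lambda>n. u1 n \<omega>" "\<lambda>n. u2 n \<omega>", OF assms(2) u] unfolding X1_def X2_def by simp_all
qed

lemma integral_sign:
  assumes "2 \<le> k"
  shows "(\<integral>\<omega>. 2 * real (xi1 k \<omega>) - 1 \<partial>M) = al1" "(\<integral>\<omega>. 2 * real (xi2 k \<omega>) - 1 \<partial>M) = al2"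
  using integral_comp_if_distr[OF measurable_xi_u(1)[OF assms] xi1_distr[OF assms], of "\<lambda>z. 2 * real z - 1"]
    integral_comp_if_distr[OF measurable_xi_u(2)[OF assms] xi2_distr[OF assms], of "\<lambda>z. 2 * real z - 1"]
    p1 p2 by simp_all

lemma integral_pick:
  assumes "1 \<le> n" "k \<in> {1..n}"
  shows "(\<integral>\<omega>. of_bool (u1 n \<omega> = k) \<partial>M) = 1 / n" "(\<integral>\<omega>. of_bool (u2 n \<omega> = k) \<partial>M) = 1 / n"
  using integral_comp_if_distr[OF measurable_xi_u(3)[OF assms(1)] u1_distr[OF assms(1)], of "\<lambda>z. of_bool (z = k)"]
    integral_comp_if_distr[OF measurable_xi_u(4)[OF assms(1)] u2_distr[OF assms(1)], of "\<lambda>z. of_bool (z = k)"]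
    assms by (simp_all add: integral_pmf_of_set of_bool_def)

section \<open>Conditional moments of the next step\<close>

lemma measurable_sign_drivers:
  "Xi1 k \<in> I \<Longrightarrow> (\<lambda>\<omega>. 2 * real (xi1 k \<omega>) - 1) \<in> borel_measurable (drivers I)"
  "Xi2 k \<in> I \<Longrightarrow> (\<lambda>\<omega>. 2 * real (xi2 k \<omega>) - 1) \<in> borel_measurable (drivers I)"
  by (rule measurable_compose[OF measurable_drivers_xi_u(1)], simp_all,
      rule measurable_compose[OF measurable_drivers_xi_u(2)], simp_all)

lemma measurable_indicator_pick_drivers:
  "U1 n \<in> I \<Longrightarrow> (\<lambda>\<omega>. of_bool (u1 n \<omega> = k) :: real) \<in> borel_measurable (drivers I)"
  "U2 n \<in> I \<Longrightarrow> (\<lambda>\<omega>. of_bool (u2 n \<omega> = k) :: real) \<in> borel_measurable (drivers I)"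
  by (rule measurable_compose[OF measurable_drivers_xi_u(3)], simp_all,
      rule measurable_compose[OF measurable_drivers_xi_u(4)], simp_all)

lemma measurable_pick_drivers:
  assumes "past n \<subseteq> I"
  shows "U1 n \<in> I \<Longrightarrow> (\<lambda>\<omega>. \<Sum>k\<in>{1..n}. X1 k \<omega> * of_bool (u1 n \<omega> = k)) \<in> borel_measurable (drivers I)"
    and "U2 n \<in> I \<Longrightarrow> (\<lambda>\<omega>. \<Sum>k\<in>{1..n}. X2 k \<omega> * of_bool (u2 n \<omega> = k)) \<in> borel_measurable (drivers I)"
  by (rule borel_measurable_sum borel_measurable_times measurable_X_drivers[OF assms]
      measurable_indicator_pick_drivers | simp)+

lemma AE_abs_mult_X_le:
  assumes "AE \<omega> in M. \<bar>g \<omega>\<bar> \<le> B"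
  shows "AE \<omega> in M. \<bar>g \<omega> * X1 k \<omega>\<bar> \<le> B" "AE \<omega> in M. \<bar>g \<omega> * X2 k \<omega>\<bar> \<le> B"
proof -
  have "\<bar>g \<omega> * X1 k \<omega>\<bar> \<le> B \<and> \<bar>g \<omega> * X2 k \<omega>\<bar> \<le> B" if "\<bar>g \<omega>\<bar> \<le> B" "good \<omega>" for \<omega>
    using good_X[OF that(2), of k] that(1) by (auto simp: abs_mult)
  with assms AE_good show "AE \<omega> in M. \<bar>g \<omega> * X1 k \<omega>\<bar> \<le> B" "AE \<omega> in M. \<bar>g \<omega> * X2 k \<omega>\<bar> \<le> B"
    by (auto elim: eventually_elim2)
qed

lemma integral_mult_X1_Suc:
  fixes g :: "'a \<Rightarrow> real"
  assumes n: "1 \<le> n" and I: "past n \<subseteq> I" "I \<subseteq> ew_index" "U2 n \<notin> I" "Xi1 (Suc n) \<notin> I"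
    and g: "g \<in> borel_measurable (drivers I)" "AE \<omega> in M. \<bar>g \<omega>\<bar> \<le> B"
  shows "(\<integral>\<omega>. g \<omega> * X1 (Suc n) \<omega> \<partial>M) = al1 / n * (\<integral>\<omega>. g \<omega> * S2 n \<omega> \<partial>M)"
proof -
  let ?e = "\<lambda>\<omega>. 2 * real (xi1 (Suc n) \<omega>) - 1"
  have idx: "insert (U2 n) I \<subseteq> ew_index" "{U2 n} \<subseteq> ew_index" "{Xi1 (Suc n)} \<subseteq> ew_index"
    using n I(2) by (auto simp: ew_index_def)
  have gX: "(\<lambda>\<omega>. g \<omega> * X2 k \<omega>) \<in> borel_measurable (drivers I)" if "k \<le> n" for k
    using g(1) measurable_X_drivers(2)[OF I(1) that] by simp
  have e: "?e \<in> borel_measurable (drivers {Xi1 (Suc n)})" by (rule measurable_sign_drivers(1)) simp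
  have [measurable]: "g \<in> borel_measurable M" "?e \<in> borel_measurable M" "u2 n \<in> M \<rightarrow>\<^sub>M count_space UNIV"
    using measurable_drivers_M[OF I(2) g(1)] measurable_drivers_M[OF idx(3) e] measurable_xi_u(4) n by auto
  have int_gX: "integrable M (\<lambda>\<omega>. g \<omega> * X2 k \<omega>)" for k
    using AE_abs_mult_X_le(2)[OF g(2)] by (intro integrable_const_bound[where B=B]) auto
  have "AE \<omega> in M. \<bar>?e \<omega>\<bar> \<le> 1"
    using AE_good by eventually_elim (use good_abs_sign_le n in auto)
  then have int_e: "integrable M ?e" by (intro integrable_const_bound[where B=1]) auto
  have "AE \<omega> in M. g \<omega> * X1 (Suc n) \<omega> = g \<omega> * ?e \<omega> * (\<Sum>k\<in>{1..n}. X2 k \<omega> * of_bool (u2 n \<omega> = k))"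
    using AE_good by eventually_elim (simp add: good_X_Suc[OF _ n])
  then have "(\<integral>\<omega>. g \<omega> * X1 (Suc n) \<omega> \<partial>M) =
      (\<integral>\<omega>. g \<omega> * ?e \<omega> * (\<Sum>k\<in>{1..n}. X2 k \<omega> * of_bool (u2 n \<omega> = k)) \<partial>M)"
    by (intro integral_cong_AE) measurable
  also have "\<dots> = (\<integral>\<omega>. ?e \<omega> \<partial>M) * (\<Sum>k\<in>{1..n}. (\<integral>\<omega>. of_bool (u2 n \<omega> = k) \<partial>M) * (\<integral>\<omega>. g \<omega> * X2 k \<omega> \<partial>M))"
  proof (rule integral_mult_random_pick[OF _ int_gX int_e])
    fix k assume "k \<in> {1..n}"
    then have gXU: "(\<lambda>\<omega>. g \<omega> * X2 k \<omega> * of_bool (u2 n \<omega> = k)) \<in> borel_measurable (drivers (insert (U2 n) I))"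
      by (intro borel_measurable_times[OF measurable_drivers_subset[OF _ gX] measurable_indicator_pick_drivers(2)]) auto
    show "indep_var borel (\<lambda>\<omega>. g \<omega> * X2 k \<omega>) borel (\<lambda>\<omega>. of_bool (u2 n \<omega> = k))"
      using \<open>k \<in> {1..n}\<close> I by (intro indep_drivers[OF I(2) idx(2) _ gX measurable_indicator_pick_drivers(2)]) auto
    show "indep_var borel (\<lambda>\<omega>. g \<omega> * X2 k \<omega> * of_bool (u2 n \<omega> = k)) borel ?e"
      using I by (intro indep_drivers[OF idx(1) idx(3) _ gXU e]) auto
  qed simp
  also have "\<dots> = al1 / n * (\<Sum>k\<in>{1..n}. \<integral>\<omega>. g \<omega> * X2 k \<omega> \<partial>M)"
    using integral_sign(1)[of "Suc n"] integral_pick(2)[OF n] n by (simp add: sum_distrib_left)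
  also have "(\<Sum>k\<in>{1..n}. \<integral>\<omega>. g \<omega> * X2 k \<omega> \<partial>M) = (\<integral>\<omega>. g \<omega> * S2 n \<omega> \<partial>M)"
    using int_gX by (simp add: S2_def sum_distrib_left)
  finally show ?thesis .
qed

lemma integral_mult_X2_Suc:
  fixes g :: "'a \<Rightarrow> real"
  assumes n: "1 \<le> n" and I: "past n \<subseteq> I" "I \<subseteq> ew_index" "U1 n \<notin> I" "Xi2 (Suc n) \<notin> I"
    and g: "g \<in> borel_measurable (drivers I)" "AE \<omega> in M. \<bar>g \<omega>\<bar> \<le> B"
  shows "(\<integral>\<omega>. g \<omega> * X2 (Suc n) \<omega> \<partial>M) = al2 / n * (\<integral>\<omega>. g \<omega> * S1 n \<omega> \<partial>M)"
proof -
  let ?e = "\<lambda>\<omega>. 2 * real (xi2 (Suc n) \<omega>) - 1"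
  have idx: "insert (U1 n) I \<subseteq> ew_index" "{U1 n} \<subseteq> ew_index" "{Xi2 (Suc n)} \<subseteq> ew_index"
    using n I(2) by (auto simp: ew_index_def)
  have gX: "(\<lambda>\<omega>. g \<omega> * X1 k \<omega>) \<in> borel_measurable (drivers I)" if "k \<le> n" for k
    using g(1) measurable_X_drivers(1)[OF I(1) that] by simp
  have e: "?e \<in> borel_measurable (drivers {Xi2 (Suc n)})" by (rule measurable_sign_drivers(2)) simp
  have [measurable]: "g \<in> borel_measurable M" "?e \<in> borel_measurable M" "u1 n \<in> M \<rightarrow>\<^sub>M count_space UNIV"
    using measurable_drivers_M[OF I(2) g(1)] measurable_drivers_M[OF idx(3) e] measurable_xi_u(3) n by auto
  have int_gX: "integrable M (\<lambda>\<omega>. g \<omega> * X1 k \<omega>)" for k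
    using AE_abs_mult_X_le(1)[OF g(2)] by (intro integrable_const_bound[where B=B]) auto
  have "AE \<omega> in M. \<bar>?e \<omega>\<bar> \<le> 1"
    using AE_good by eventually_elim (use good_abs_sign_le n in auto)
  then have int_e: "integrable M ?e" by (intro integrable_const_bound[where B=1]) auto
  have "AE \<omega> in M. g \<omega> * X2 (Suc n) \<omega> = g \<omega> * ?e \<omega> * (\<Sum>k\<in>{1..n}. X1 k \<omega> * of_bool (u1 n \<omega> = k))"
    using AE_good by eventually_elim (simp add: good_X_Suc[OF _ n])
  then have "(\<integral>\<omega>. g \<omega> * X2 (Suc n) \<omega> \<partial>M) =
      (\<integral>\<omega>. g \<omega> * ?e \<omega> * (\<Sum>k\<in>{1..n}. X1 k \<omega> * of_bool (u1 n \<omega> = k)) \<partial>M)"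
    by (intro integral_cong_AE) measurable
  also have "\<dots> = (\<integral>\<omega>. ?e \<omega> \<partial>M) * (\<Sum>k\<in>{1..n}. (\<integral>\<omega>. of_bool (u1 n \<omega> = k) \<partial>M) * (\<integral>\<omega>. g \<omega> * X1 k \<omega> \<partial>M))"
  proof (rule integral_mult_random_pick[OF _ int_gX int_e])
    fix k assume "k \<in> {1..n}"
    then have gXU: "(\<lambda>\<omega>. g \<omega> * X1 k \<omega> * of_bool (u1 n \<omega> = k)) \<in> borel_measurable (drivers (insert (U1 n) I))"
      by (intro borel_measurable_times[OF measurable_drivers_subset[OF _ gX] measurable_indicator_pick_drivers(1)]) auto
    show "indep_var borel (\<lambda>\<omega>. g \<omega> * X1 k \<omega>) borel (\<lambda>\<omega>. of_bool (u1 n \<omega> = k))"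
      using \<open>k \<in> {1..n}\<close> I by (intro indep_drivers[OF I(2) idx(2) _ gX measurable_indicator_pick_drivers(1)]) auto
    show "indep_var borel (\<lambda>\<omega>. g \<omega> * X1 k \<omega> * of_bool (u1 n \<omega> = k)) borel ?e"
      using I by (intro indep_drivers[OF idx(1) idx(3) _ gXU e]) auto
  qed simp
  also have "\<dots> = al2 / n * (\<Sum>k\<in>{1..n}. \<integral>\<omega>. g \<omega> * X1 k \<omega> \<partial>M)"
    using integral_sign(2)[of "Suc n"] integral_pick(1)[OF n] n by (simp add: sum_distrib_left)
  also have "(\<Sum>k\<in>{1..n}. \<integral>\<omega>. g \<omega> * X1 k \<omega> \<partial>M) = (\<integral>\<omega>. g \<omega> * S1 n \<omega> \<partial>M)"
    using int_gX by (simp add: S1_def sum_distrib_left)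
  finally show ?thesis .
qed

lemma integral_mult_X1_X2_Suc:
  fixes g :: "'a \<Rightarrow> real"
  assumes n: "1 \<le> n" and g: "g \<in> borel_measurable (drivers (past n))" "AE \<omega> in M. \<bar>g \<omega>\<bar> \<le> B"
  shows "(\<integral>\<omega>. g \<omega> * X1 (Suc n) \<omega> * X2 (Suc n) \<omega> \<partial>M) =
    al1 * al2 / n\<^sup>2 * (\<integral>\<omega>. g \<omega> * S1 n \<omega> * S2 n \<omega> \<partial>M)"
proof -
  define I where "I = past n \<union> {U1 n, Xi2 (Suc n)}"
  define h where "h \<omega> = g \<omega> * ((2 * real (xi2 (Suc n) \<omega>) - 1) * (\<Sum>k\<in>{1..n}. X1 k \<omega> * of_bool (u1 n \<omega> = k)))" for \<omega>
  have I: "past n \<subseteq> I" "I \<subseteq> ew_index" "U2 n \<notin> I" "Xi1 (Suc n) \<notin> I"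
    using n past_subset by (auto simp: I_def past_def ew_index_def)
  have h_eq: "AE \<omega> in M. h \<omega> = g \<omega> * X2 (Suc n) \<omega>"
    using AE_good by eventually_elim (simp add: h_def good_X_Suc[OF _ n])
  have h: "h \<in> borel_measurable (drivers I)"
    unfolding h_def using measurable_drivers_subset[OF I(1) g(1)]
    by (intro borel_measurable_times measurable_sign_drivers measurable_pick_drivers) (auto simp: I_def)
  have hB: "AE \<omega> in M. \<bar>h \<omega>\<bar> \<le> B"
    using h_eq AE_abs_mult_X_le(2)[OF g(2)] by eventually_elim simp
  have gS: "(\<lambda>\<omega>. g \<omega> * S2 n \<omega>) \<in> borel_measurable (drivers (past n))"
    using g(1) measurable_S_drivers(2)[OF order_refl] by simp
  have gSB: "AE \<omega> in M. \<bar>g \<omega> * S2 n \<omega>\<bar> \<le> B * n"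
    using g(2) AE_good by eventually_elim (auto simp: abs_mult intro!: mult_mono good_abs_S_le)
  have [measurable]: "g \<in> borel_measurable M" "h \<in> borel_measurable M"
    using measurable_drivers_M[OF past_subset g(1)] measurable_drivers_M[OF I(2) h] by auto
  have "(\<integral>\<omega>. g \<omega> * X1 (Suc n) \<omega> * X2 (Suc n) \<omega> \<partial>M) = (\<integral>\<omega>. h \<omega> * X1 (Suc n) \<omega> \<partial>M)"
    using h_eq by (intro integral_cong_AE) (measurable, auto elim: eventually_mono)
  also have "\<dots> = al1 / n * (\<integral>\<omega>. h \<omega> * S2 n \<omega> \<partial>M)"
    by (rule integral_mult_X1_Suc[OF n I h hB])
  also have "(\<integral>\<omega>. h \<omega> * S2 n \<omega> \<partial>M) = (\<integral>\<omega>. g \<omega> * S2 n \<omega> * X2 (Suc n) \<omega> \<partial>M)"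
    using h_eq by (intro integral_cong_AE) (measurable, auto elim: eventually_mono)
  also have "\<dots> = al2 / n * (\<integral>\<omega>. g \<omega> * S2 n \<omega> * S1 n \<omega> \<partial>M)"
    by (rule integral_mult_X2_Suc[OF n order_refl past_subset _ _ gS gSB]) (auto simp: past_def)
  finally show ?thesis by (simp add: power2_eq_square mult_ac)
qed

lemma AE_abs_X_S_le:
  "AE \<omega> in M. \<bar>X1 k \<omega>\<bar> \<le> 1 \<and> \<bar>X2 k \<omega>\<bar> \<le> 1 \<and> \<bar>S1 n \<omega>\<bar> \<le> n \<and> \<bar>S2 n \<omega>\<bar> \<le> n"
  using AE_good by eventually_elim (simp add: good_abs_X_le good_abs_S_le)

lemma integrable_mult_next_step:
  fixes c :: "'a \<Rightarrow> real"
  assumes c: "c \<in> borel_measurable (FF j)" "AE \<omega> in M. \<bar>c \<omega>\<bar> \<le> B"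
  shows "integrable M c" "integrable M (\<lambda>\<omega>. c \<omega> * X1 (Suc j) \<omega>)" "integrable M (\<lambda>\<omega>. c \<omega> * X2 (Suc j) \<omega>)"
    "integrable M (\<lambda>\<omega>. c \<omega> * (X1 (Suc j) \<omega> * X2 (Suc j) \<omega>))" "integrable M (\<lambda>\<omega>. c \<omega> * S1 j \<omega>)"
    "integrable M (\<lambda>\<omega>. c \<omega> * S2 j \<omega>)" "integrable M (\<lambda>\<omega>. c \<omega> * (S1 j \<omega> * S2 j \<omega>))"
proof -
  have cM: "c \<in> borel_measurable M" using c(1) measurable_from_subalg[OF subalgebra_FF] by auto
  note int = integrable_mult_bounded[OF cM _ c(2)]
  note XS = AE_abs_X_S_le[of "Suc j" j]
  show "integrable M c" using c(2) cM by (intro integrable_const_bound[where B=B]) auto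
  show "integrable M (\<lambda>\<omega>. c \<omega> * X1 (Suc j) \<omega>)"
    by (rule int[where C=1]) (use XS in \<open>auto elim: eventually_mono\<close>)
  show "integrable M (\<lambda>\<omega>. c \<omega> * X2 (Suc j) \<omega>)"
    by (rule int[where C=1]) (use XS in \<open>auto elim: eventually_mono\<close>)
  show "integrable M (\<lambda>\<omega>. c \<omega> * (X1 (Suc j) \<omega> * X2 (Suc j) \<omega>))"
    by (rule int[where C=1]) (use XS in \<open>auto elim: eventually_mono simp: abs_mult mult_le_one\<close>)
  show "integrable M (\<lambda>\<omega>. c \<omega> * S1 j \<omega>)"
    by (rule int[where C=j]) (use XS in \<open>auto elim: eventually_mono\<close>)
  show "integrable M (\<lambda>\<omega>. c \<omega> * S2 j \<omega>)"
    by (rule int[where C=j]) (use XS in \<open>auto elim: eventually_mono\<close>)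
  show "integrable M (\<lambda>\<omega>. c \<omega> * (S1 j \<omega> * S2 j \<omega>))"
    by (rule int[where C="j * j"]) (use XS in \<open>auto elim: eventually_mono simp: abs_mult mult_mono'\<close>)
qed

lemma integral_next_step:
  fixes c0 c1 c2 c3 :: "'a \<Rightarrow> real"
  assumes j: "1 \<le> j"
    and c: "c0 \<in> borel_measurable (FF j)" "c1 \<in> borel_measurable (FF j)"
      "c2 \<in> borel_measurable (FF j)" "c3 \<in> borel_measurable (FF j)"
    and cB: "AE \<omega> in M. \<bar>c0 \<omega>\<bar> \<le> B \<and> \<bar>c1 \<omega>\<bar> \<le> B \<and> \<bar>c2 \<omega>\<bar> \<le> B \<and> \<bar>c3 \<omega>\<bar> \<le> B"
  shows "(\<integral>\<omega>. c0 \<omega> + c1 \<omega> * X1 (Suc j) \<omega> + c2 \<omega> * X2 (Suc j) \<omega> + c3 \<omega> * (X1 (Suc j) \<omega> * X2 (Suc j) \<omega>) \<partial>M) =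
    (\<integral>\<omega>. c0 \<omega> + al1 / j * (c1 \<omega> * S2 j \<omega>) + al2 / j * (c2 \<omega> * S1 j \<omega>)
       + al1 * al2 / j\<^sup>2 * (c3 \<omega> * (S1 j \<omega> * S2 j \<omega>)) \<partial>M)"
proof -
  have B: "AE \<omega> in M. \<bar>c0 \<omega>\<bar> \<le> B" "AE \<omega> in M. \<bar>c1 \<omega>\<bar> \<le> B"
    "AE \<omega> in M. \<bar>c2 \<omega>\<bar> \<le> B" "AE \<omega> in M. \<bar>c3 \<omega>\<bar> \<le> B"
    using cB by (auto elim: eventually_mono)
  note int0 = integrable_mult_next_step[OF c(1) B(1)] and int1 = integrable_mult_next_step[OF c(2) B(2)]
    and int2 = integrable_mult_next_step[OF c(3) B(3)] and int3 = integrable_mult_next_step[OF c(4) B(4)]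
  have step: "(\<integral>\<omega>. c1 \<omega> * X1 (Suc j) \<omega> \<partial>M) = al1 / j * (\<integral>\<omega>. c1 \<omega> * S2 j \<omega> \<partial>M)"
    "(\<integral>\<omega>. c2 \<omega> * X2 (Suc j) \<omega> \<partial>M) = al2 / j * (\<integral>\<omega>. c2 \<omega> * S1 j \<omega> \<partial>M)"
    "(\<integral>\<omega>. c3 \<omega> * (X1 (Suc j) \<omega> * X2 (Suc j) \<omega>) \<partial>M) =
      al1 * al2 / j\<^sup>2 * (\<integral>\<omega>. c3 \<omega> * (S1 j \<omega> * S2 j \<omega>) \<partial>M)"
  proof -
    show "(\<integral>\<omega>. c1 \<omega> * X1 (Suc j) \<omega> \<partial>M) = al1 / j * (\<integral>\<omega>. c1 \<omega> * S2 j \<omega> \<partial>M)"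
      by (rule integral_mult_X1_Suc[OF j order_refl past_subset _ _ measurable_FF_drivers[OF c(2)] B(2)])
        (simp_all add: past_def)
    show "(\<integral>\<omega>. c2 \<omega> * X2 (Suc j) \<omega> \<partial>M) = al2 / j * (\<integral>\<omega>. c2 \<omega> * S1 j \<omega> \<partial>M)"
      by (rule integral_mult_X2_Suc[OF j order_refl past_subset _ _ measurable_FF_drivers[OF c(3)] B(3)])
        (simp_all add: past_def)
    show "(\<integral>\<omega>. c3 \<omega> * (X1 (Suc j) \<omega> * X2 (Suc j) \<omega>) \<partial>M) =
      al1 * al2 / j\<^sup>2 * (\<integral>\<omega>. c3 \<omega> * (S1 j \<omega> * S2 j \<omega>) \<partial>M)"
      using integral_mult_X1_X2_Suc[OF j measurable_FF_drivers[OF c(4)] B(4)] by (simp add: mult.assoc)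
  qed
  show ?thesis using int0 int1 int2 int3 step by simp
qed

lemma set_integral_next_step:
  fixes d0 d1 d2 d3 :: "'a \<Rightarrow> real"
  assumes j: "1 \<le> j" and A: "A \<in> sets (FF j)"
    and d: "d0 \<in> borel_measurable (FF j)" "d1 \<in> borel_measurable (FF j)"
      "d2 \<in> borel_measurable (FF j)" "d3 \<in> borel_measurable (FF j)"
    and dB: "AE \<omega> in M. \<bar>d0 \<omega>\<bar> \<le> B \<and> \<bar>d1 \<omega>\<bar> \<le> B \<and> \<bar>d2 \<omega>\<bar> \<le> B \<and> \<bar>d3 \<omega>\<bar> \<le> B"
  shows "(\<integral>\<omega>\<in>A. d0 \<omega> + d1 \<omega> * X1 (Suc j) \<omega> + d2 \<omega> * X2 (Suc j) \<omega> + d3 \<omega> * (X1 (Suc j) \<omega> * X2 (Suc j) \<omega>) \<partial>M) =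
    (\<integral>\<omega>\<in>A. d0 \<omega> + al1 / j * (d1 \<omega> * S2 j \<omega>) + al2 / j * (d2 \<omega> * S1 j \<omega>)
       + al1 * al2 / j\<^sup>2 * (d3 \<omega> * (S1 j \<omega> * S2 j \<omega>)) \<partial>M)"
proof -
  have Ad: "(\<lambda>\<omega>. indicator A \<omega> * d \<omega>) \<in> borel_measurable (FF j)"
    if "d \<in> borel_measurable (FF j)" for d :: "'a \<Rightarrow> real"
    using A that by (intro borel_measurable_times borel_measurable_indicator)
  have AdB: "AE \<omega> in M. \<bar>indicator A \<omega> * d0 \<omega>\<bar> \<le> B \<and> \<bar>indicator A \<omega> * d1 \<omega>\<bar> \<le> B
      \<and> \<bar>indicator A \<omega> * d2 \<omega>\<bar> \<le> B \<and> \<bar>indicator A \<omega> * d3 \<omega>\<bar> \<le> B"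
    using dB by eventually_elim (auto simp: indicator_def)
  from integral_next_step[OF j Ad[OF d(1)] Ad[OF d(2)] Ad[OF d(3)] Ad[OF d(4)] AdB]
  show ?thesis unfolding set_lebesgue_integral_def by (simp add: algebra_simps)
qed

lemma real_cond_exp_next_step:
  fixes f d0 d1 d2 d3 :: "'a \<Rightarrow> real"
  assumes j: "1 \<le> j" and f: "f \<in> borel_measurable M"
    and d: "d0 \<in> borel_measurable (FF j)" "d1 \<in> borel_measurable (FF j)"
      "d2 \<in> borel_measurable (FF j)" "d3 \<in> borel_measurable (FF j)"
    and dB: "AE \<omega> in M. \<bar>d0 \<omega>\<bar> \<le> B \<and> \<bar>d1 \<omega>\<bar> \<le> B \<and> \<bar>d2 \<omega>\<bar> \<le> B \<and> \<bar>d3 \<omega>\<bar> \<le> B"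
    and f_eq: "AE \<omega> in M. f \<omega> = d0 \<omega> + d1 \<omega> * X1 (Suc j) \<omega> + d2 \<omega> * X2 (Suc j) \<omega>
      + d3 \<omega> * (X1 (Suc j) \<omega> * X2 (Suc j) \<omega>)"
  shows "AE \<omega> in M. real_cond_exp M (FF j) f \<omega> = d0 \<omega> + al1 / j * (d1 \<omega> * S2 j \<omega>)
      + al2 / j * (d2 \<omega> * S1 j \<omega>) + al1 * al2 / j\<^sup>2 * (d3 \<omega> * (S1 j \<omega> * S2 j \<omega>))"
    (is "AE \<omega> in M. _ = ?g \<omega>")
proof -
  interpret finite_measure_subalgebra M "FF j" by unfold_locales (rule subalgebra_FF)
  let ?h = "\<lambda>\<omega>. d0 \<omega> + d1 \<omega> * X1 (Suc j) \<omega> + d2 \<omega> * X2 (Suc j) \<omega> + d3 \<omega> * (X1 (Suc j) \<omega> * X2 (Suc j) \<omega>)"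
  have [measurable]: "d0 \<in> borel_measurable M" "d1 \<in> borel_measurable M" "d2 \<in> borel_measurable M"
    "d3 \<in> borel_measurable M" "f \<in> borel_measurable M"
    using d f measurable_from_subalg[OF subalgebra_FF] by auto
  have B: "AE \<omega> in M. \<bar>d0 \<omega>\<bar> \<le> B" "AE \<omega> in M. \<bar>d1 \<omega>\<bar> \<le> B"
    "AE \<omega> in M. \<bar>d2 \<omega>\<bar> \<le> B" "AE \<omega> in M. \<bar>d3 \<omega>\<bar> \<le> B"
    using dB by (auto elim: eventually_mono)
  note int0 = integrable_mult_next_step[OF d(1) B(1)] and int1 = integrable_mult_next_step[OF d(2) B(2)]
    and int2 = integrable_mult_next_step[OF d(3) B(3)] and int3 = integrable_mult_next_step[OF d(4) B(4)]
  have "(\<integral>\<omega>\<in>A. f \<omega> \<partial>M) = (\<integral>\<omega>\<in>A. ?g \<omega> \<partial>M)" if A: "A \<in> sets (FF j)" for A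
  proof -
    have [measurable]: "A \<in> sets M" using A subalgebra_FF unfolding subalgebra_def by auto
    have "(\<integral>\<omega>\<in>A. f \<omega> \<partial>M) = (\<integral>\<omega>\<in>A. ?h \<omega> \<partial>M)"
      unfolding set_lebesgue_integral_def using f_eq by (intro integral_cong_AE) (measurable, auto elim: eventually_mono)
    also have "\<dots> = (\<integral>\<omega>\<in>A. ?g \<omega> \<partial>M)" by (rule set_integral_next_step[OF j A d dB])
    finally show ?thesis .
  qed
  moreover have "integrable M f"
    using f_eq int0 int1 int2 int3 by (intro integrable_cong_AE_imp[OF _ f, of ?h]) (auto elim: eventually_mono)
  moreover have "integrable M ?g" using int0 int1 int2 int3 by simp
  moreover have "?g \<in> borel_measurable (FF j)" using d measurable_S_FF by measurable
  ultimately show ?thesis by (intro real_cond_exp_charact)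
qed

section \<open>Second moments and the strong law of large numbers\<close>

definition "Q n \<omega> = \<bar>al2\<bar> * (S1 n \<omega>)\<^sup>2 + \<bar>al1\<bar> * (S2 n \<omega>)\<^sup>2"
definition "mu = sqrt (max 0 (al1 * al2))"

lemma S_Suc: "S1 (Suc n) \<omega> = S1 n \<omega> + X1 (Suc n) \<omega>" "S2 (Suc n) \<omega> = S2 n \<omega> + X2 (Suc n) \<omega>"
  by (simp_all add: S1_def S2_def)

lemma integrable_S_products:
  "integrable M (\<lambda>\<omega>. (S1 n \<omega>)\<^sup>2)" "integrable M (\<lambda>\<omega>. (S2 n \<omega>)\<^sup>2)" "integrable M (\<lambda>\<omega>. S1 n \<omega> * S2 n \<omega>)"
  "integrable M (\<lambda>\<omega>. S1 n \<omega> * X1 (Suc n) \<omega>)" "integrable M (\<lambda>\<omega>. S2 n \<omega> * X2 (Suc n) \<omega>)"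
proof -
  have "AE \<omega> in M. \<bar>S1 n \<omega>\<bar> \<le> n" "AE \<omega> in M. \<bar>S2 n \<omega>\<bar> \<le> n"
    using AE_abs_X_S_le[of _ n] by (auto elim: eventually_mono)
  from integrable_mult_next_step[OF measurable_S_FF(1) this(1)] integrable_mult_next_step[OF measurable_S_FF(2) this(2)]
  show "integrable M (\<lambda>\<omega>. (S1 n \<omega>)\<^sup>2)" "integrable M (\<lambda>\<omega>. (S2 n \<omega>)\<^sup>2)" "integrable M (\<lambda>\<omega>. S1 n \<omega> * S2 n \<omega>)"
    "integrable M (\<lambda>\<omega>. S1 n \<omega> * X1 (Suc n) \<omega>)" "integrable M (\<lambda>\<omega>. S2 n \<omega> * X2 (Suc n) \<omega>)"
    by (simp_all add: power2_eq_square)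
qed

lemma integral_S_sq_Suc:
  assumes n: "1 \<le> n"
  shows "(\<integral>\<omega>. (S1 (Suc n) \<omega>)\<^sup>2 \<partial>M) = (\<integral>\<omega>. (S1 n \<omega>)\<^sup>2 \<partial>M) + 2 * al1 / n * (\<integral>\<omega>. S1 n \<omega> * S2 n \<omega> \<partial>M) + 1"
    and "(\<integral>\<omega>. (S2 (Suc n) \<omega>)\<^sup>2 \<partial>M) = (\<integral>\<omega>. (S2 n \<omega>)\<^sup>2 \<partial>M) + 2 * al2 / n * (\<integral>\<omega>. S1 n \<omega> * S2 n \<omega> \<partial>M) + 1"
proof -
  have SB: "AE \<omega> in M. \<bar>S1 n \<omega>\<bar> \<le> n" "AE \<omega> in M. \<bar>S2 n \<omega>\<bar> \<le> n"
    using AE_abs_X_S_le[of _ n] by (auto elim: eventually_mono)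
  have "AE \<omega> in M. (S1 (Suc n) \<omega>)\<^sup>2 = (S1 n \<omega>)\<^sup>2 + 2 * (S1 n \<omega> * X1 (Suc n) \<omega>) + 1
      \<and> (S2 (Suc n) \<omega>)\<^sup>2 = (S2 n \<omega>)\<^sup>2 + 2 * (S2 n \<omega> * X2 (Suc n) \<omega>) + 1"
    using AE_good
  proof eventually_elim
    case (elim \<omega>)
    have "(X1 (Suc n) \<omega>)\<^sup>2 = 1" "(X2 (Suc n) \<omega>)\<^sup>2 = 1" using good_X[OF elim, of "Suc n"] by auto
    then show ?case by (simp add: S_Suc power2_sum)
  qed
  then have "(\<integral>\<omega>. (S1 (Suc n) \<omega>)\<^sup>2 \<partial>M) = (\<integral>\<omega>. (S1 n \<omega>)\<^sup>2 + 2 * (S1 n \<omega> * X1 (Suc n) \<omega>) + 1 \<partial>M)"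
    "(\<integral>\<omega>. (S2 (Suc n) \<omega>)\<^sup>2 \<partial>M) = (\<integral>\<omega>. (S2 n \<omega>)\<^sup>2 + 2 * (S2 n \<omega> * X2 (Suc n) \<omega>) + 1 \<partial>M)"
    by (auto intro!: integral_cong_AE elim: eventually_mono)
  moreover have "(\<integral>\<omega>. S1 n \<omega> * X1 (Suc n) \<omega> \<partial>M) = al1 / n * (\<integral>\<omega>. S1 n \<omega> * S2 n \<omega> \<partial>M)"
    by (rule integral_mult_X1_Suc[OF n order_refl past_subset _ _ measurable_S_drivers(1)[OF order_refl] SB(1)])
      (simp_all add: past_def)
  moreover have "(\<integral>\<omega>. S2 n \<omega> * X2 (Suc n) \<omega> \<partial>M) = al2 / n * (\<integral>\<omega>. S2 n \<omega> * S1 n \<omega> \<partial>M)"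
    by (rule integral_mult_X2_Suc[OF n order_refl past_subset _ _ measurable_S_drivers(2)[OF order_refl] SB(2)])
      (simp_all add: past_def)
  ultimately show "(\<integral>\<omega>. (S1 (Suc n) \<omega>)\<^sup>2 \<partial>M) = (\<integral>\<omega>. (S1 n \<omega>)\<^sup>2 \<partial>M) + 2 * al1 / n * (\<integral>\<omega>. S1 n \<omega> * S2 n \<omega> \<partial>M) + 1"
    and "(\<integral>\<omega>. (S2 (Suc n) \<omega>)\<^sup>2 \<partial>M) = (\<integral>\<omega>. (S2 n \<omega>)\<^sup>2 \<partial>M) + 2 * al2 / n * (\<integral>\<omega>. S1 n \<omega> * S2 n \<omega> \<partial>M) + 1"
    using integrable_S_products n by (simp_all add: prob_space field_simps)
qed

lemma integral_Q: "(\<integral>\<omega>. Q n \<omega> \<partial>M) = \<bar>al2\<bar> * (\<integral>\<omega>. (S1 n \<omega>)\<^sup>2 \<partial>M) + \<bar>al1\<bar> * (\<integral>\<omega>. (S2 n \<omega>)\<^sup>2 \<partial>M)"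
  unfolding Q_def using integrable_S_products by simp

text \<open>The weights in \<open>Q\<close> make the cross terms of the two recursions combine to
  \<open>(\<bar>al2\<bar> al1 + \<bar>al1\<bar> al2) S1 S2\<close>, which \<open>cross_term_le\<close> bounds by \<open>mu Q\<close>.\<close>
lemma integral_Q_Suc_le:
  assumes n: "1 \<le> n"
  shows "(\<integral>\<omega>. Q (Suc n) \<omega> \<partial>M) \<le> (1 + 2 * mu / n) * (\<integral>\<omega>. Q n \<omega> \<partial>M) + 2"
proof -
  have al: "\<bar>al1\<bar> \<le> 1" "\<bar>al2\<bar> \<le> 1" using p1 p2 by auto
  have "(\<bar>al2\<bar> * al1 + \<bar>al1\<bar> * al2) * (\<integral>\<omega>. S1 n \<omega> * S2 n \<omega> \<partial>M)
      = (\<integral>\<omega>. (\<bar>al2\<bar> * al1 + \<bar>al1\<bar> * al2) * (S1 n \<omega> * S2 n \<omega>) \<partial>M)" by simp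
  also have "\<dots> \<le> (\<integral>\<omega>. mu * Q n \<omega> \<partial>M)"
    using integrable_S_products unfolding Q_def mu_def by (intro integral_mono cross_term_le) auto
  also have "\<dots> = mu * (\<integral>\<omega>. Q n \<omega> \<partial>M)" by simp
  finally have cross: "(\<bar>al2\<bar> * al1 + \<bar>al1\<bar> * al2) * (\<integral>\<omega>. S1 n \<omega> * S2 n \<omega> \<partial>M) \<le> mu * (\<integral>\<omega>. Q n \<omega> \<partial>M)" .
  have "(\<integral>\<omega>. Q (Suc n) \<omega> \<partial>M) = (\<integral>\<omega>. Q n \<omega> \<partial>M)
      + 2 / n * ((\<bar>al2\<bar> * al1 + \<bar>al1\<bar> * al2) * (\<integral>\<omega>. S1 n \<omega> * S2 n \<omega> \<partial>M)) + (\<bar>al1\<bar> + \<bar>al2\<bar>)"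
    unfolding integral_Q integral_S_sq_Suc[OF n] using n by (simp add: field_simps)
  also have "\<dots> \<le> (\<integral>\<omega>. Q n \<omega> \<partial>M) + 2 / n * (mu * (\<integral>\<omega>. Q n \<omega> \<partial>M)) + 2"
    using cross al by (intro add_mono mult_left_mono) auto
  finally show ?thesis by (simp add: algebra_simps)
qed

lemma integral_Q_le:
  assumes "mu < 1" "1 \<le> n"
  shows "(\<integral>\<omega>. Q n \<omega> \<partial>M) \<le> max 2 (2 / (1 - mu)) * n powr (1 + mu)"
proof (rule growth_bound_if_recursion[OF _ assms(1) _ integral_Q_Suc_le _ _ assms(2)])
  have "(\<integral>\<omega>. Q 1 \<omega> \<partial>M) = \<bar>al2\<bar> + \<bar>al1\<bar>"
    using ab by (auto simp: integral_Q S1_def S2_def X1_def X2_def prob_space)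
  then show "(\<integral>\<omega>. Q 1 \<omega> \<partial>M) \<le> max 2 (2 / (1 - mu))" using p1 p2 by auto
qed (auto simp: mu_def)

lemma AE_S_div_tendsto_0:
  assumes "al1 \<noteq> 0" "al2 \<noteq> 0" "mu < 1"
  shows "AE \<omega> in M. (\<lambda>n. S1 n \<omega> / n) \<longlonglongrightarrow> 0" "AE \<omega> in M. (\<lambda>n. S2 n \<omega> / n) \<longlonglongrightarrow> 0"
proof -
  let ?K = "max 2 (2 / (1 - mu))"
  have moments: "(\<integral>\<omega>. (S1 n \<omega>)\<^sup>2 \<partial>M) \<le> ?K / \<bar>al2\<bar> * n powr (1 + mu)"
    "(\<integral>\<omega>. (S2 n \<omega>)\<^sup>2 \<partial>M) \<le> ?K / \<bar>al1\<bar> * n powr (1 + mu)" if "1 \<le> n" for n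
  proof -
    have "0 \<le> \<bar>al2\<bar> * (\<integral>\<omega>. (S1 n \<omega>)\<^sup>2 \<partial>M)" "0 \<le> \<bar>al1\<bar> * (\<integral>\<omega>. (S2 n \<omega>)\<^sup>2 \<partial>M)"
      by (simp_all add: integral_nonneg_AE)
    with integral_Q_le[OF assms(3) that] have
      "\<bar>al2\<bar> * (\<integral>\<omega>. (S1 n \<omega>)\<^sup>2 \<partial>M) \<le> ?K * n powr (1 + mu)"
      "\<bar>al1\<bar> * (\<integral>\<omega>. (S2 n \<omega>)\<^sup>2 \<partial>M) \<le> ?K * n powr (1 + mu)"
      unfolding integral_Q by linarith+
    with assms(1,2) show "(\<integral>\<omega>. (S1 n \<omega>)\<^sup>2 \<partial>M) \<le> ?K / \<bar>al2\<bar> * n powr (1 + mu)"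
      "(\<integral>\<omega>. (S2 n \<omega>)\<^sup>2 \<partial>M) \<le> ?K / \<bar>al1\<bar> * n powr (1 + mu)"
      by (simp_all add: field_simps)
  qed
  have lip: "AE \<omega> in M. \<forall>n. \<bar>S1 (Suc n) \<omega> - S1 n \<omega>\<bar> \<le> 1" "AE \<omega> in M. \<forall>n. \<bar>S2 (Suc n) \<omega> - S2 n \<omega>\<bar> \<le> 1"
    using AE_good by (auto elim!: eventually_mono simp: S_Suc good_abs_X_le)
  show "AE \<omega> in M. (\<lambda>n. S1 n \<omega> / n) \<longlonglongrightarrow> 0"
    using integrable_S_products(1) moments(1) assms(3) lip(1)
    by (rule AE_div_tendsto_zero_if_second_moment_le)
  show "AE \<omega> in M. (\<lambda>n. S2 n \<omega> / n) \<longlonglongrightarrow> 0"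
    using integrable_S_products(2) moments(2) assms(3) lip(2)
    by (rule AE_div_tendsto_zero_if_second_moment_le)
qed

end

section \<open>Conditional second moments of the innovations\<close>

lemma continuous_bounded_on_unit_square:
  fixes C :: "real \<times> real \<Rightarrow> 'b::real_normed_vector"
  assumes "continuous_on UNIV C"
  obtains B where "\<And>s t. \<bar>s\<bar> \<le> 1 \<Longrightarrow> \<bar>t\<bar> \<le> 1 \<Longrightarrow> norm (C (s, t)) \<le> B"
proof -
  have "compact (C ` ({-1..1} \<times> {-1..1}))"
    by (intro compact_continuous_image continuous_on_subset[OF assms] compact_Times compact_Icc) simp
  then obtain B where "\<forall>z \<in> C ` ({-1..1} \<times> {-1..1}). norm z \<le> B"
    using compact_imp_bounded bounded_iff by metis
  then show ?thesis by (intro that[of B]) (auto simp: abs_le_iff)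
qed

context ew
begin

definition "avg j \<omega> = (S1 j \<omega> / j, S2 j \<omega> / j)"

lemma measurable_avg_FF: "avg j \<in> borel_measurable (FF j)"
  unfolding avg_def[abs_def] using measurable_S_FF[of j] by measurable

lemma AE_norm_continuous_avg_le:
  fixes C :: "real \<times> real \<Rightarrow> 'b::real_normed_vector"
  assumes "continuous_on UNIV C"
  obtains B where "AE \<omega> in M. norm (C (avg j \<omega>)) \<le> B"
proof -
  obtain B where B: "\<And>s t. \<bar>s\<bar> \<le> 1 \<Longrightarrow> \<bar>t\<bar> \<le> 1 \<Longrightarrow> norm (C (s, t)) \<le> B"
    using continuous_bounded_on_unit_square[OF assms] by blast
  have unit: "\<bar>S1 j \<omega> / j\<bar> \<le> 1 \<and> \<bar>S2 j \<omega> / j\<bar> \<le> 1" if "good \<omega>" for \<omega>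
    using good_abs_S_le[OF that, of j] by (auto simp: abs_divide divide_le_eq_1)
  from AE_good have "AE \<omega> in M. norm (C (avg j \<omega>)) \<le> B"
    by eventually_elim (use unit in \<open>auto simp: avg_def intro: B\<close>)
  then show ?thesis by (rule that)
qed

lemma cplx_cond_exp_next_step:
  fixes f :: "'a \<Rightarrow> complex" and Cc Cx Cy Cxy :: "real \<times> real \<Rightarrow> complex"
  assumes j: "1 \<le> j" and f: "f \<in> borel_measurable M"
    and C: "continuous_on UNIV Cc" "continuous_on UNIV Cx" "continuous_on UNIV Cy" "continuous_on UNIV Cxy"
    and f_eq: "AE \<omega> in M. f \<omega> = Cc (avg j \<omega>) + Cx (avg j \<omega>) * X1 (Suc j) \<omega> + Cy (avg j \<omega>) * X2 (Suc j) \<omega>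
      + Cxy (avg j \<omega>) * (X1 (Suc j) \<omega> * X2 (Suc j) \<omega>)"
  shows "AE \<omega> in M. cplx_cond_exp M (FF j) f \<omega> = Cc (avg j \<omega>) + Cx (avg j \<omega>) * (al1 * snd (avg j \<omega>))
      + Cy (avg j \<omega>) * (al2 * fst (avg j \<omega>)) + Cxy (avg j \<omega>) * (al1 * al2 * (fst (avg j \<omega>) * snd (avg j \<omega>)))"
proof -
  obtain B0 B1 B2 B3 where B0: "AE \<omega> in M. norm (Cc (avg j \<omega>)) \<le> B0" and B1: "AE \<omega> in M. norm (Cx (avg j \<omega>)) \<le> B1"
    and B2: "AE \<omega> in M. norm (Cy (avg j \<omega>)) \<le> B2" and B3: "AE \<omega> in M. norm (Cxy (avg j \<omega>)) \<le> B3"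
    using AE_norm_continuous_avg_le[OF C(1)] AE_norm_continuous_avg_le[OF C(2)]
      AE_norm_continuous_avg_le[OF C(3)] AE_norm_continuous_avg_le[OF C(4)] by metis
  define B where "B = max (max B0 B1) (max B2 B3)"
  from B0 B1 B2 B3 have B: "AE \<omega> in M. \<forall>C \<in> {Cc, Cx, Cy, Cxy}. norm (C (avg j \<omega>)) \<le> B"
    unfolding B_def by eventually_elim auto
  have meas: "(\<lambda>\<omega>. g (C (avg j \<omega>))) \<in> borel_measurable (FF j)"
    if "g \<in> {Re, Im}" "continuous_on UNIV C" for g and C :: "real \<times> real \<Rightarrow> complex"
    using that(1) measurable_compose[OF measurable_avg_FF borel_measurable_continuous_onI[OF that(2)]] by auto
  have component: "AE \<omega> in M. real_cond_exp M (FF j) (\<lambda>\<omega>. g (f \<omega>)) \<omega> = g (Cc (avg j \<omega>))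
      + al1 / j * (g (Cx (avg j \<omega>)) * S2 j \<omega>) + al2 / j * (g (Cy (avg j \<omega>)) * S1 j \<omega>)
      + al1 * al2 / j\<^sup>2 * (g (Cxy (avg j \<omega>)) * (S1 j \<omega> * S2 j \<omega>))"
    if g: "g \<in> {Re, Im}" for g
  proof (rule real_cond_exp_next_step[OF j])
    show "(\<lambda>\<omega>. g (f \<omega>)) \<in> borel_measurable M" using g f by auto
    show "AE \<omega> in M. \<bar>g (Cc (avg j \<omega>))\<bar> \<le> B \<and> \<bar>g (Cx (avg j \<omega>))\<bar> \<le> B
        \<and> \<bar>g (Cy (avg j \<omega>))\<bar> \<le> B \<and> \<bar>g (Cxy (avg j \<omega>))\<bar> \<le> B"
      using B by eventually_elim (use g in \<open>auto intro: order.trans[OF abs_Re_le_cmod] order.trans[OF abs_Im_le_cmod]\<close>)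
    show "AE \<omega> in M. g (f \<omega>) = g (Cc (avg j \<omega>)) + g (Cx (avg j \<omega>)) * X1 (Suc j) \<omega> + g (Cy (avg j \<omega>)) * X2 (Suc j) \<omega>
        + g (Cxy (avg j \<omega>)) * (X1 (Suc j) \<omega> * X2 (Suc j) \<omega>)"
      using f_eq by eventually_elim (use g in auto)
  qed (use meas[OF g] C in auto)
  from component[OF insertI1] component[OF insertI2[OF singletonI]] show ?thesis
    by eventually_elim (simp add: cplx_cond_exp_def complex_eq_iff avg_def field_simps power2_eq_square)
qed

end

lemma innovation_product_expansion:
  fixes A B r r' lam lam' x x' :: "'a::field"
  assumes "A * A = 1" "B * B = 1"
  shows "(A - r * B + lam * x) / (1 + lam) * ((A - r' * B + lam' * x') / (1 + lam')) =
    (1 + r * r' + lam * lam' * x * x') / ((1 + lam) * (1 + lam'))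
    + (lam * x + lam' * x') / ((1 + lam) * (1 + lam')) * A
    + - (r * lam' * x' + r' * lam * x) / ((1 + lam) * (1 + lam')) * B
    + - (r + r') / ((1 + lam) * (1 + lam')) * (A * B)"
proof -
  have "(A - r * B + lam * x) * (A - r' * B + lam' * x') = (1 + r * r' + lam * lam' * x * x')
      + (lam * x + lam' * x') * A + - (r * lam' * x' + r' * lam * x) * B + - (r + r') * (A * B)"
    using assms by algebra
  then show ?thesis unfolding times_divide_times_eq by (simp only: times_divide_eq_left) (simp add: add_divide_distrib)
qed

lemma lam_alpha_sq:
  assumes "a1 * a2 \<noteq> 0"
  shows "(lam_alpha a1 a2)\<^sup>2 = complex_of_real (a1 * a2)"
proof -
  have "(sgn a2)\<^sup>2 = 1" using assms by (auto simp: sgn_if)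
  then have sq: "(complex_of_real (sgn a2 * sqrt \<bar>a1 * a2\<bar>))\<^sup>2 = complex_of_real \<bar>a1 * a2\<bar>"
    by (simp only: of_real_power[symmetric] power_mult_distrib real_sqrt_pow2_iff abs_ge_zero) simp
  show ?thesis
  proof (cases "a1 * a2 > 0")
    case True
    then show ?thesis using sq by (simp add: lam_alpha_def)
  next
    case False
    then have "a1 * a2 < 0" using assms by linarith
    then show ?thesis using sq by (simp add: lam_alpha_def power_mult_distrib)
  qed
qed

lemma r_alpha_sq:
  assumes "a1 * a2 \<noteq> 0"
  shows "(r_alpha a1 a2)\<^sup>2 = complex_of_real (a1 / a2)"
proof -
  have sq: "(complex_of_real (sqrt x))\<^sup>2 = complex_of_real x" if "0 \<le> x" for x
    using that by (simp only: of_real_power[symmetric] real_sqrt_pow2)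
  show ?thesis
  proof (cases "a1 * a2 > 0")
    case True
    then have "a1 / a2 > 0" by (simp add: zero_less_divide_iff zero_less_mult_iff)
    then show ?thesis using True sq[of "a1 / a2"] by (simp add: r_alpha_def)
  next
    case False
    then have "a1 * a2 < 0" using assms by linarith
    then have "a1 / a2 < 0" by (simp add: divide_less_0_iff mult_less_0_iff)
    then show ?thesis using False sq[of "- (a1 / a2)"] by (simp add: r_alpha_def power_mult_distrib)
  qed
qed

lemma mult_ne_1_if_lam_alpha_ne_pm1:
  assumes "a1 * a2 \<noteq> 0" "lam_alpha a1 a2 \<noteq> 1" "lam_alpha a1 a2 \<noteq> -1"
  shows "a1 * a2 \<noteq> 1"
proof
  assume "a1 * a2 = 1"
  with lam_alpha_sq[OF assms(1)] have "(lam_alpha a1 a2)\<^sup>2 = complex_of_real 1" by (simp only:)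
  with assms(2,3) show False by (simp add: power2_eq_1_iff)
qed

locale ew_nondeg = ew +
  assumes al_nonzero: "2 * p1 - 1 \<noteq> 0" "2 * p2 - 1 \<noteq> 0"
    and al_prod_ne_1: "(2 * p1 - 1) * (2 * p2 - 1) \<noteq> 1"
begin

lemma mu_less_1: "mu < 1"
proof -
  have "al1 * al2 \<le> \<bar>al1\<bar> * \<bar>al2\<bar>" by (metis abs_ge_self abs_mult)
  also have "\<dots> \<le> 1" using p1 p2 by (intro mult_le_one) auto
  finally show ?thesis using al_prod_ne_1 unfolding mu_def by (simp add: max_def)
qed

lemma AE_avg_tendsto_0: "AE \<omega> in M. (\<lambda>j. avg j \<omega>) \<longlonglongrightarrow> (0, 0)"
  using AE_S_div_tendsto_0[OF al_nonzero mu_less_1] by eventually_elim (simp add: avg_def tendsto_Pair)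

lemma cplx_cond_exp_next_step_tendsto:
  fixes f :: "nat \<Rightarrow> 'a \<Rightarrow> complex" and Cc Cx Cy Cxy :: "real \<times> real \<Rightarrow> complex"
  assumes C: "continuous_on UNIV Cc" "continuous_on UNIV Cx" "continuous_on UNIV Cy" "continuous_on UNIV Cxy"
    and f: "\<And>j. f j \<in> borel_measurable M"
    and f_eq: "\<And>j. 1 \<le> j \<Longrightarrow> AE \<omega> in M. f j \<omega> = Cc (avg j \<omega>) + Cx (avg j \<omega>) * X1 (Suc j) \<omega>
      + Cy (avg j \<omega>) * X2 (Suc j) \<omega> + Cxy (avg j \<omega>) * (X1 (Suc j) \<omega> * X2 (Suc j) \<omega>)"
  shows "AE \<omega> in M. (\<lambda>j. cplx_cond_exp M (FF j) (f j) \<omega>) \<longlonglongrightarrow> Cc (0, 0)"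
proof -
  define P where "P p = Cc p + Cx p * (al1 * snd p) + Cy p * (al2 * fst p) + Cxy p * (al1 * al2 * (fst p * snd p))"
    for p :: "real \<times> real"
  have "AE \<omega> in M. 1 \<le> j \<longrightarrow> cplx_cond_exp M (FF j) (f j) \<omega> = P (avg j \<omega>)" for j
    using cplx_cond_exp_next_step[OF _ f C f_eq] unfolding P_def by (cases "1 \<le> j") auto
  then have "AE \<omega> in M. \<forall>j. 1 \<le> j \<longrightarrow> cplx_cond_exp M (FF j) (f j) \<omega> = P (avg j \<omega>)"
    by (simp add: AE_all_countable)
  with AE_avg_tendsto_0 show ?thesis
  proof eventually_elim
    case (elim \<omega>)
    have "continuous_on UNIV P" unfolding P_def by (intro continuous_intros C)
    then have "(\<lambda>j. P (avg j \<omega>)) \<longlonglongrightarrow> P (0, 0)"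
      by (rule continuous_on_tendsto_compose[OF _ elim(1)]) simp_all
    moreover have "\<forall>\<^sub>F j in sequentially. P (avg j \<omega>) = cplx_cond_exp M (FF j) (f j) \<omega>"
      using eventually_ge_at_top[of 1] by eventually_elim (use elim(2) in auto)
    ultimately show ?case by (simp add: Lim_transform_eventually P_def)
  qed
qed

definition "xr r n \<omega> = (complex_of_real (S1 n \<omega>) - r * complex_of_real (S2 n \<omega>)) / of_nat n"
definition "eps r lam j \<omega> =
  (complex_of_real (X1 (j + 1) \<omega>) - r * complex_of_real (X2 (j + 1) \<omega>) + lam * xr r j \<omega>) / (1 + lam)"

lemma xr_avg: "xr r n \<omega> = complex_of_real (fst (avg n \<omega>)) - r * complex_of_real (snd (avg n \<omega>))"
  by (simp add: xr_def avg_def diff_divide_distrib)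

lemma xr_tendsto_0: "AE \<omega> in M. (\<lambda>n. xr r n \<omega>) \<longlonglongrightarrow> 0"
  using AE_avg_tendsto_0
proof eventually_elim
  case (elim \<omega>)
  have "continuous_on UNIV (\<lambda>p. complex_of_real (fst p) - r * complex_of_real (snd p))"
    by (intro continuous_intros)
  from continuous_on_tendsto_compose[OF this elim] show ?case by (simp add: xr_avg)
qed

lemma cond_exp_eps_mult_tendsto:
  assumes "lam \<noteq> -1" "lam' \<noteq> -1"
  shows "AE \<omega> in M. (\<lambda>j. (1 + lam) * (1 + lam') * cplx_cond_exp M (FF j) (\<lambda>\<omega>. eps r lam j \<omega> * eps r' lam' j \<omega>) \<omega>)
    \<longlonglongrightarrow> 1 + r * r'"
proof -
  define D where "D = (1 + lam) * (1 + lam')"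
  have D: "D \<noteq> 0" using assms by (auto simp: D_def add_eq_0_iff)
  define x where "x r p = complex_of_real (fst p) - r * complex_of_real (snd p)" for r and p :: "real \<times> real"
  have [measurable]: "(\<lambda>\<omega>. eps r lam j \<omega> * eps r' lam' j \<omega>) \<in> borel_measurable M" for j
    unfolding eps_def xr_def by measurable
  \<comment> \<open>As \<open>X1 (Suc j)\<^sup>2 = X2 (Suc j)\<^sup>2 = 1\<close>, the product is affine in \<open>X1 (Suc j)\<close>, \<open>X2 (Suc j)\<close> and
    their product, with coefficients continuous in \<open>avg j\<close>.\<close>
  have "AE \<omega> in M. (\<lambda>j. cplx_cond_exp M (FF j) (\<lambda>\<omega>. eps r lam j \<omega> * eps r' lam' j \<omega>) \<omega>)
      \<longlonglongrightarrow> (1 + r * r' + lam * lam' * x r (0, 0) * x r' (0, 0)) / D"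
  proof (rule cplx_cond_exp_next_step_tendsto[where Cx="\<lambda>p. (lam * x r p + lam' * x r' p) / D"
        and Cy="\<lambda>p. - (r * lam' * x r' p + r' * lam * x r p) / D" and Cxy="\<lambda>p. - (r + r') / D"])
    fix j :: nat
    have unit: "good \<omega> \<Longrightarrow> complex_of_real (X1 (Suc j) \<omega>) * complex_of_real (X1 (Suc j) \<omega>) = 1
        \<and> complex_of_real (X2 (Suc j) \<omega>) * complex_of_real (X2 (Suc j) \<omega>) = 1" for \<omega>
      using good_X[of \<omega> "Suc j"] by auto
    show "AE \<omega> in M. eps r lam j \<omega> * eps r' lam' j \<omega> = (1 + r * r' + lam * lam' * x r (avg j \<omega>) * x r' (avg j \<omega>)) / D
        + (lam * x r (avg j \<omega>) + lam' * x r' (avg j \<omega>)) / D * X1 (Suc j) \<omega>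
        + - (r * lam' * x r' (avg j \<omega>) + r' * lam * x r (avg j \<omega>)) / D * X2 (Suc j) \<omega>
        + - (r + r') / D * (X1 (Suc j) \<omega> * X2 (Suc j) \<omega>)"
      using AE_good
    proof eventually_elim
      case (elim \<omega>)
      let ?A = "complex_of_real (X1 (Suc j) \<omega>)" and ?B = "complex_of_real (X2 (Suc j) \<omega>)"
      have "eps r lam j \<omega> * eps r' lam' j \<omega> = (?A - r * ?B + lam * x r (avg j \<omega>)) / (1 + lam)
          * ((?A - r' * ?B + lam' * x r' (avg j \<omega>)) / (1 + lam'))"
        by (simp add: eps_def xr_avg x_def)
      also have "\<dots> = (1 + r * r' + lam * lam' * x r (avg j \<omega>) * x r' (avg j \<omega>)) / D
          + (lam * x r (avg j \<omega>) + lam' * x r' (avg j \<omega>)) / D * ?A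
          + - (r * lam' * x r' (avg j \<omega>) + r' * lam * x r (avg j \<omega>)) / D * ?B + - (r + r') / D * (?A * ?B)"
        unfolding D_def by (rule innovation_product_expansion) (use unit[OF elim] in auto)
      finally show ?case by (simp only: of_real_mult)
    qed
  qed (use D in \<open>auto simp: x_def intro!: continuous_intros\<close>)
  then show ?thesis
    by eventually_elim (use D in \<open>auto simp: x_def D_def dest: tendsto_mult_left[of _ _ _ "(1 + lam) * (1 + lam')"]\<close>)
qed

end

theorem lemma3p2:
  fixes M :: "'a measure"
    and p1 p2 al1 al2 :: real
    and a b :: int
    and xi1 xi2 u1 u2 :: "nat \<Rightarrow> 'a \<Rightarrow> nat"
    and X1 X2 S1 S2 :: "nat \<Rightarrow> 'a \<Rightarrow> real"
    and F :: "nat \<Rightarrow> 'a measure"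
    and lam r :: complex
    and x y ex ey :: "nat \<Rightarrow> 'a \<Rightarrow> complex"
  assumes "prob_space M"
    and "p1 \<in> {0..1}" and "p2 \<in> {0..1}"
    and al1_def: "al1 = 2 * p1 - 1" and al2_def: "al2 = 2 * p2 - 1"
    and "a \<in> {-1, 1}" and "b \<in> {-1, 1}"
    and indep: "prob_space.indep_vars M (\<lambda>_. count_space UNIV) (ew_family xi1 xi2 u1 u2) ew_index"
    and xi1_distr: "\<forall>n\<ge>2. distr M (count_space UNIV) (xi1 n) = measure_pmf (map_pmf of_bool (bernoulli_pmf p1))"
    and xi2_distr: "\<forall>n\<ge>2. distr M (count_space UNIV) (xi2 n) = measure_pmf (map_pmf of_bool (bernoulli_pmf p2))"
    and u1_distr: "\<forall>n\<ge>1. distr M (count_space UNIV) (u1 n) = measure_pmf (pmf_of_set {1..n})"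
    and u2_distr: "\<forall>n\<ge>1. distr M (count_space UNIV) (u2 n) = measure_pmf (pmf_of_set {1..n})"
    and X1_def: "X1 = (\<lambda>k \<omega>. real_of_int (fst (ew_step a b (\<lambda>n. xi1 n \<omega>) (\<lambda>n. xi2 n \<omega>) (\<lambda>n. u1 n \<omega>) (\<lambda>n. u2 n \<omega>) k)))"
    and X2_def: "X2 = (\<lambda>k \<omega>. real_of_int (snd (ew_step a b (\<lambda>n. xi1 n \<omega>) (\<lambda>n. xi2 n \<omega>) (\<lambda>n. u1 n \<omega>) (\<lambda>n. u2 n \<omega>) k)))"
    and S1_def: "S1 = (\<lambda>n \<omega>. \<Sum>k\<in>{1..n}. X1 k \<omega>)"
    and S2_def: "S2 = (\<lambda>n \<omega>. \<Sum>k\<in>{1..n}. X2 k \<omega>)"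
    and F_def: "F = (\<lambda>n. sigma (space M)
                 ({X1 k -` A \<inter> space M | k A. k \<in> {1..n} \<and> A \<in> sets borel} \<union>
                  {X2 k -` A \<inter> space M | k A. k \<in> {1..n} \<and> A \<in> sets borel}))"
    and lam_def: "lam = lam_alpha al1 al2"
    and r_def: "r = r_alpha al1 al2"
    and x_def: "x = (\<lambda>n \<omega>. (complex_of_real (S1 n \<omega>) - r * complex_of_real (S2 n \<omega>)) / of_nat n)"
    and y_def: "y = (\<lambda>n \<omega>. (complex_of_real (S1 n \<omega>) + r * complex_of_real (S2 n \<omega>)) / of_nat n)"
    and ex_def: "ex = (\<lambda>j \<omega>. (complex_of_real (X1 (j + 1) \<omega>) - r * complex_of_real (X2 (j + 1) \<omega>)
                                 + lam * x j \<omega>) / (1 + lam))"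
    and ey_def: "ey = (\<lambda>j \<omega>. (complex_of_real (X1 (j + 1) \<omega>) + r * complex_of_real (X2 (j + 1) \<omega>)
                                 - lam * y j \<omega>) / (1 - lam))"
    and "al1 * al2 \<noteq> 0"
    and "lam \<noteq> 1" and "lam \<noteq> -1"
  shows "(AE \<omega> in M. (\<lambda>n. x n \<omega>) \<longlonglongrightarrow> 0 \<and> (\<lambda>n. y n \<omega>) \<longlonglongrightarrow> 0)
       \<and> (AE \<omega> in M. (\<lambda>n. S1 n \<omega> / real n) \<longlonglongrightarrow> 0 \<and> (\<lambda>n. S2 n \<omega> / real n) \<longlonglongrightarrow> 0)
       \<and> (AE \<omega> in M.
            (\<lambda>j. (1 + lam)\<^sup>2 * cplx_cond_exp M (F j) (\<lambda>\<omega>. (ex j \<omega>)\<^sup>2) \<omega>)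
               \<longlonglongrightarrow> 1 + complex_of_real (al1 / al2)
          \<and> (\<lambda>j. (1 - lam)\<^sup>2 * cplx_cond_exp M (F j) (\<lambda>\<omega>. (ey j \<omega>)\<^sup>2) \<omega>)
               \<longlonglongrightarrow> 1 + complex_of_real (al1 / al2))
       \<and> (AE \<omega> in M.
            (\<lambda>j. complex_of_real (1 - al1 * al2) * cplx_cond_exp M (F j) (\<lambda>\<omega>. ex j \<omega> * ey j \<omega>) \<omega>)
               \<longlonglongrightarrow> 1 - complex_of_real (al1 / al2))"
proof -
  have rr: "r * r = complex_of_real (al1 / al2)"
    using r_alpha_sq[OF \<open>al1 * al2 \<noteq> 0\<close>] unfolding r_def by (simp add: power2_eq_square)
  have lam_prod: "(1 + lam) * (1 - lam) = complex_of_real (1 - al1 * al2)"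
    using lam_alpha_sq[OF \<open>al1 * al2 \<noteq> 0\<close>] unfolding lam_def by (simp add: power2_eq_square algebra_simps)
  have "al1 * al2 \<noteq> 1"
    using mult_ne_1_if_lam_alpha_ne_pm1 \<open>al1 * al2 \<noteq> 0\<close> \<open>lam \<noteq> 1\<close> \<open>lam \<noteq> -1\<close> unfolding lam_def .
  moreover have "al1 \<noteq> 0" "al2 \<noteq> 0" using \<open>al1 * al2 \<noteq> 0\<close> by auto
  ultimately interpret E: ew_nondeg M p1 p2 a b xi1 xi2 u1 u2
    using assms(1-3,6-12) unfolding ew_nondeg_def ew_nondeg_axioms_def ew_def ew_axioms_def al1_def al2_def
    by blast
  have X: "X1 = E.X1" "X2 = E.X2" unfolding X1_def X2_def E.X1_def[abs_def] E.X2_def[abs_def] by simp_all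
  have S: "S1 = E.S1" "S2 = E.S2" unfolding S1_def S2_def E.S1_def[abs_def] E.S2_def[abs_def] X by simp_all
  have F: "F = E.FF" unfolding F_def E.FF_def[abs_def] X by simp
  have xy: "x = E.xr r" "y = E.xr (- r)" unfolding x_def y_def E.xr_def[abs_def] S by simp_all
  have eps: "ex = E.eps r lam" "ey = E.eps (- r) (- lam)"
    unfolding ex_def ey_def E.eps_def[abs_def] X xy by simp_all
  have "- lam \<noteq> -1" using \<open>lam \<noteq> 1\<close> by simp
  from E.cond_exp_eps_mult_tendsto[OF \<open>lam \<noteq> -1\<close> \<open>lam \<noteq> -1\<close>, of r r]
    E.cond_exp_eps_mult_tendsto[OF this this, of "- r" "- r"] E.cond_exp_eps_mult_tendsto[OF \<open>lam \<noteq> -1\<close> this, of r "- r"]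
  show ?thesis unfolding xy S F eps
    by (intro conjI eventually_conj E.xr_tendsto_0 E.AE_S_div_tendsto_0[OF E.al_nonzero E.mu_less_1])
      (simp_all add: power2_eq_square rr lam_prod)
qed

end
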